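(* Let $\overline{D};\Delta\vdash e:t\leadsto E$. Let $\sigma_{FG}$ be a substitution of FG values for FG variables, $\sigma_V$ a substitution of TL values for TL variables, and $\sigma_m$ a TL method substitution such that, for some $k$, $\Delta\models_k\sigma_{FG}\approx\sigma_V$ and $\overline{D}\approx_k\sigma_m$ (relations taken w.r.t. $\overline{D}$ and $\sigma_m$). Then $\models_k t:\sigma_{FG}(e)\approx\sigma_V(E)$.
   Context: Featherweight Go (FG). Field names $f$, method names $m$, variables $x$, structure type names $t_S,u_S$, interface type names $t_I,u_I$; types $t,u$ range over both kinds of names. A method signature is $M = (x_1\,t_1,\ldots,x_n\,t_n)\,t$; a method specification is $m M$. Expressions: $e ::= x \mid e.m(e_1,\ldots,e_n) \mid t_S\{e_1,\ldots,e_n\} \mid e.f \mid e.(t)$. Declarations: $\mathtt{type}\ t_S\ \mathtt{struct}\{f_1\,t_1 \ldots f_n\,t_n\}$, $\mathtt{type}\ t_I\ \mathtt{interface}\{S_1 \ldots S_q\}$ ($S_j$ method specifications, in this order), and method declarations $\mathtt{func}\ (x\ t_S)\ m M\ \{\mathtt{return}\ e\}$. It is assumed that structures are non-recursive, field names within a struct are distinct, method names within an interface are distinct, and each method declaration is uniquely identified by receiver type and method name. $\mathrm{methods}(\overline{D},t_S)=\{mM \mid \mathtt{func}\ (x\ t_S)\ mM\{\ldots\}\in\overline{D}\}$; $\mathrm{methods}(\overline{D},t_I)$ is the set of specifications of the declaration of $t_I$. Subtyping: $t_S <: t_S$, and $t <: u_I$ iff $\mathrm{methods}(\overline{D},t)\supseteq\mathrm{methods}(\overline{D},u_I)$.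 $\mathrm{methodLookup}(\overline{D},(m,t_S))$ is the unique declaration $\mathtt{func}\ (x\ t_S)\ mM\{\ldots\}\in\overline{D}$. FG values $v ::= t_S\{v_1,\ldots,v_n\}$. Reduction $\overline{D}\vdash d\longrightarrow e$ is closed under evaluation contexts $\mathcal{E} ::= [\,] \mid t_S\{\overline{v},\mathcal{E},\overline{e}\} \mid \mathcal{E}.f \mid \mathcal{E}.(t) \mid \mathcal{E}.m(\overline{e}) \mid v.m(\overline{v},\mathcal{E},\overline{e})$, with rules $t_S\{v_1..v_n\}.f_i \longrightarrow v_i$; $v.m(v_1..v_n)\longrightarrow [x\mapsto v, x_i\mapsto v_i]e$ if $v=t_S\{\ldots\}$ and $\mathtt{func}\ (x\ t_S)\ m(x_1\,t_1..x_n\,t_n)\,t\{\mathtt{return}\ e\}\in\overline{D}$; $v.(t)\longrightarrow v$ if $v=t_S\{\ldots\}$ and $t_S<:t$. $\overline{D}\vdash e\longrightarrow^{\le k} v$ means $e$ reduces to value $v$ in at most $k$ steps. Target language (TL): $E ::= X \mid K \mid E\,E \mid \lambda X.E \mid \mathtt{case}\ E\ \mathtt{of}\ [Pat_1\to E_1,\ldots]$, $Pat ::= K\,X_1\ldots X_n$, with tuple constructors $(E_1,\ldots,E_n)$; $\lambda Pat.E$ abbreviates $\lambda X.\mathtt{case}\ X\ \mathtt{of}\ [Pat\to E]$ ($X$ fresh) and nested patterns abbreviate nested case expressions. TL values $V ::= X \mid K\,V_1\ldots V_n$. Given a method substitution $\sigma_m$ (finite map from variables $Y$ to $\lambda$-abstractions),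 reduction $\sigma_m\vdash E\longrightarrow E'$ is closed under contexts $R ::= [\,]\mid K\,\overline{V}\,R\,\overline{E}\mid \mathtt{case}\ R\ \mathtt{of}\ [\ldots]\mid R\,E\mid V\,R$ with rules $(\lambda X.E)\,V\longrightarrow[X\mapsto V]E$; $\mathtt{case}\ K\,V_1..V_n\ \mathtt{of}\ [\ldots]\longrightarrow[X_i\mapsto V_i]E'$ if $K\,X_1..X_n\to E'$ is a clause; $Y\,E\longrightarrow\sigma_m(Y)\,E$. $\sigma_m\vdash E\longrightarrow^{\le k}V$ analogously. Translation. FG variable $x$ becomes TL variable $X$; each struct $t_S$ gets constructor $K_{t_S}$, each interface $t_I$ constructor $K_{t_I}$; the method declaration of $m$ for receiver $t_S$ gets TL variable $m_{t_S}$. $\Delta$ is a finite map from FG variables to types. Rules for $\overline{D};\Delta\vdash e:t\leadsto E$: (var) $(x:t)\in\Delta$ gives $x:t\leadsto X$. (struct) $\mathtt{type}\ t_S\ \mathtt{struct}\{f_1t_1..f_nt_n\}\in\overline{D}$ and $e_i:t_i\leadsto E_i$ give $t_S\{e_1..e_n\}:t_S\leadsto K_{t_S}(E_1,\ldots,E_n)$. (access) $e:t_S\leadsto E$ with that struct gives $e.f_i:t_i\leadsto \mathtt{case}\ E\ \mathtt{of}\ K_{t_S}(X_1,..,X_n)\to X_i$. (call-struct) $m(x_1t_1..x_nt_n)t\in\mathrm{methods}(\overline{D},t_S)$, $e:t_S\leadsto E$, $e_i:t_i\leadsto E_i$ give $e.m(e_1..e_n):t\leadsto m_{t_S}\,E\,(E_1,..,E_n)$.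 (call-iface) $e:t_I\leadsto E$, $\mathtt{type}\ t_I\ \mathtt{interface}\{S_1..S_q\}\in\overline{D}$, $S_j=m(x_1t_1..x_nt_n)t$, $e_i:t_i\leadsto E_i$, $X,X_1..X_q$ fresh give $e.m(e_1..e_n):t\leadsto\mathtt{case}\ E\ \mathtt{of}\ K_{t_I}(X,X_1,..,X_q)\to X_j\,X\,(E_1,..,E_n)$. (sub) $e:t\leadsto E_2$ and $\overline{D}\vdash t<:u\leadsto E_1$ give $e:u\leadsto E_1\,E_2$. (assert) $e:t_I\leadsto E_2$ and $\overline{D}\vdash t_I\triangleright u\leadsto E_1$ give $e.(u):u\leadsto E_1\,E_2$. Interface-value construction: if $\mathtt{type}\ t_I\ \mathtt{interface}\{m_1M_1..m_nM_n\}\in\overline{D}$ and $\mathrm{methods}(\overline{D},t_S)\supseteq\{m_iM_i\}$ then $\overline{D}\vdash t_S<:t_I\leadsto\lambda X.K_{t_I}(X,m_{1,t_S},\ldots,m_{n,t_S})$; if $\mathtt{type}\ t_I\ \mathtt{interface}\{R_1..R_n\}$, $\mathtt{type}\ u_I\ \mathtt{interface}\{S_1..S_q\}\in\overline{D}$ and $\pi:\{1..q\}\to\{1..n\}$ with $S_i=R_{\pi(i)}$, then $\overline{D}\vdash t_I<:u_I\leadsto\lambda X.\mathtt{case}\ X\ \mathtt{of}\ K_{t_I}(X,X_1,..,X_n)\to K_{u_I}(X,X_{\pi(1)},..,X_{\pi(q)})$. Interface-value destruction: if $\mathtt{type}\ t_I\ \mathtt{interface}\{R_1..R_n\}\in\overline{D}$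 and $t_S<:t_I$ then $\overline{D}\vdash t_I\triangleright t_S\leadsto\lambda X.\mathtt{case}\ X\ \mathtt{of}\ K_{t_I}(K_{t_S}\,Y,X_1,..,X_n)\to K_{t_S}\,Y$; and $\overline{D}\vdash t_I\triangleright u_I\leadsto\lambda X.\mathtt{case}\ X\ \mathtt{of}\ K_{t_I}(Y,X_1,..,X_n)\to\mathtt{case}\ Y\ \mathtt{of}\ [Cls_1,\ldots]$, where for each struct declaration $t_{Sj}$ in $\overline{D}$ with $\overline{D}\vdash t_{Sj}<:u_I\leadsto E_j$ there is a clause $Cls_j = K_{t_{Sj}}\,Y'\to E_j\,(K_{t_{Sj}}\,Y')$. Step-indexed logical relation (relative to fixed $\overline{D}$ and $\sigma_m$), defined by the rules: (Exp) $\models_k t: e\approx E$ holds if for all $k_1<k$, $k_2<k$, FG values $v$ and TL values $V$ with $k-k_1-k_2>0$, $\overline{D}\vdash e\longrightarrow^{\le k_1}v$ and $\sigma_m\vdash E\longrightarrow^{\le k_2}V$, we have $\models_{k-k_1-k_2} t: v\approx V$. (Struct) $\models_k t_S: t_S\{v_1..v_n\}\approx K_{t_S}(V_1,..,V_n)$ holds if $\mathtt{type}\ t_S\ \mathtt{struct}\{f_1t_1..f_nt_n\}\in\overline{D}$ and $\models_k t_i: v_i\approx V_i$ for all $i$. (Iface) $\models_k t_I: v\approx K_{t_I}(V,V_1,..,V_n)$ holds if $V=K_{u_S}\,\overline{V'}$ for some struct $u_S$, $\models_{k_1}u_S: v\approx V$ for all $k_1<k$, $\mathrm{methods}(\overline{D},t_I)=\{m_1M_1,..,m_nM_n\}$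 (in declaration order), and for all $k_2<k$ and $i$, $\models_{k_2} m_iM_i:\mathrm{methodLookup}(\overline{D},(m_i,u_S))\approx V_i$. (Method) $\models_k m(x_1t_1..x_nt_n)t:\mathtt{func}\ (x\ t_S)\ m(x_1t_1..x_nt_n)t\{\mathtt{return}\ e\}\approx V$ holds if for all $k'\le k$ and $v',V',v_i,V_i$ with $\models_{k'}t_S:v'\approx V'$ and $\models_{k'}t_i:v_i\approx V_i$ for all $i$, we have $\models_{k'}t:[x\mapsto v',x_i\mapsto v_i]e\approx(V\,V')\,(V_1,..,V_n)$. (Bindings) $\Delta\models_k\sigma_{FG}\approx\sigma_V$ iff $\models_k t:\sigma_{FG}(x)\approx\sigma_V(X)$ for all $(x:t)\in\Delta$. (Decls) $\overline{D}\approx_k\sigma_m$ iff for every $\mathtt{func}\ (x\ t_S)\ mM\{\mathtt{return}\ e\}\in\overline{D}$, $\models_k mM:\mathtt{func}\ (x\ t_S)\ mM\{\mathtt{return}\ e\}\approx m_{t_S}$ (the TL variable). *)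

theory Defs
  imports Main
begin

section \<open>Featherweight Go (FG)\<close>

type_synonym vname = string
type_synonym fname = string
type_synonym mname = string
type_synonym sname = string
type_synonym iname = string

datatype ty = TS sname | TI iname

type_synonym sig = "(vname \<times> ty) list \<times> ty"   (* (x1 t1 .. xn tn) t *)
type_synonym spec = "mname \<times> sig"

datatype fexp =
    Var vname
  | Call fexp mname "fexp list"
  | SLit sname "fexp list"
  | Field fexp fname
  | Assert fexp ty

datatype decl =
    TypeStruct sname "(fname \<times> ty) list"
  | TypeIface iname "spec list"
  | Func vname sname mname sig fexp   (* func (x tS) m M {return e} *)

type_synonym decls = "decl list"

definition upds :: "('a \<Rightarrow> 'b) \<Rightarrow> 'a list \<Rightarrow> 'b list \<Rightarrow> 'a \<Rightarrow> 'b" where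
  "upds \<sigma> xs vs = foldl (\<lambda>\<sigma>' (x, v). \<sigma>'(x := v)) \<sigma> (zip xs vs)"

fun methods :: "decls \<Rightarrow> ty \<Rightarrow> spec set" where
  "methods D (TS s) = {(m, M). \<exists>x e. Func x s m M e \<in> set D}"
| "methods D (TI t) = {S. \<exists>Ss. TypeIface t Ss \<in> set D \<and> S \<in> set Ss}"

definition subtype :: "decls \<Rightarrow> ty \<Rightarrow> ty \<Rightarrow> bool" where
  "subtype D t u \<longleftrightarrow> (\<exists>s. t = TS s \<and> u = TS s) \<or> (\<exists>uI. u = TI uI \<and> methods D u \<subseteq> methods D t)"

definition method_lookup :: "decls \<Rightarrow> mname \<Rightarrow> sname \<Rightarrow> decl \<Rightarrow> bool" where
  "method_lookup D m s d \<longleftrightarrow> d \<in> set D \<and> (\<exists>x M e. d = Func x s m M e)"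

definition struct_dep :: "decls \<Rightarrow> (sname \<times> sname) set" where
  "struct_dep D = {(s, s'). \<exists>fs f. TypeStruct s fs \<in> set D \<and> (f, TS s') \<in> set fs}"

definition struct_names :: "decls \<Rightarrow> sname list" where
  "struct_names D = concat (map (\<lambda>d. case d of TypeStruct s fs \<Rightarrow> [s] | _ \<Rightarrow> []) D)"

definition iface_names :: "decls \<Rightarrow> iname list" where
  "iface_names D = concat (map (\<lambda>d. case d of TypeIface t Ss \<Rightarrow> [t] | _ \<Rightarrow> []) D)"

definition func_keys :: "decls \<Rightarrow> (sname \<times> mname) list" where
  "func_keys D = concat (map (\<lambda>d. case d of Func x s m M e \<Rightarrow> [(s, m)] | _ \<Rightarrow> []) D)"

definition wf_decls :: "decls \<Rightarrow> bool" where
  "wf_decls D \<longleftrightarrow>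
     acyclic (struct_dep D)
   \<and> (\<forall>s fs. TypeStruct s fs \<in> set D \<longrightarrow> distinct (map fst fs))
   \<and> (\<forall>t Ss. TypeIface t Ss \<in> set D \<longrightarrow> distinct (map fst Ss))
   \<and> distinct (func_keys D)
   \<and> distinct (struct_names D)
   \<and> distinct (iface_names D)"

fun fval :: "fexp \<Rightarrow> bool" where
  "fval (SLit s es) = list_all fval es"
| "fval _ = False"

fun fsubst :: "(vname \<Rightarrow> fexp) \<Rightarrow> fexp \<Rightarrow> fexp" where
  "fsubst \<sigma> (Var x) = \<sigma> x"
| "fsubst \<sigma> (Call e m es) = Call (fsubst \<sigma> e) m (map (fsubst \<sigma>) es)"
| "fsubst \<sigma> (SLit s es) = SLit s (map (fsubst \<sigma>) es)"
| "fsubst \<sigma> (Field e f) = Field (fsubst \<sigma> e) f"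
| "fsubst \<sigma> (Assert e t) = Assert (fsubst \<sigma> e) t"

inductive fstep :: "decls \<Rightarrow> fexp \<Rightarrow> fexp \<Rightarrow> bool" for D where
  field: "\<lbrakk> TypeStruct s fs \<in> set D; list_all fval vs; length vs = length fs;
            i < length fs; fst (fs ! i) = f \<rbrakk>
          \<Longrightarrow> fstep D (Field (SLit s vs) f) (vs ! i)"
| call: "\<lbrakk> list_all fval vs0; list_all fval vs; Func x s m (ps, t) e \<in> set D;
           length vs = length ps \<rbrakk>
         \<Longrightarrow> fstep D (Call (SLit s vs0) m vs)
               (fsubst (upds (Var(x := SLit s vs0)) (map fst ps) vs) e)"
| assert: "\<lbrakk> list_all fval vs0; subtype D (TS s) t \<rbrakk>
           \<Longrightarrow> fstep D (Assert (SLit s vs0) t) (SLit s vs0)"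
| ctx_lit: "\<lbrakk> list_all fval vs; fstep D e e' \<rbrakk>
            \<Longrightarrow> fstep D (SLit s (vs @ e # es)) (SLit s (vs @ e' # es))"
| ctx_field: "fstep D e e' \<Longrightarrow> fstep D (Field e f) (Field e' f)"
| ctx_assert: "fstep D e e' \<Longrightarrow> fstep D (Assert e t) (Assert e' t)"
| ctx_recv: "fstep D e e' \<Longrightarrow> fstep D (Call e m es) (Call e' m es)"
| ctx_arg: "\<lbrakk> fval v; list_all fval vs; fstep D e e' \<rbrakk>
            \<Longrightarrow> fstep D (Call v m (vs @ e # es)) (Call v m (vs @ e' # es))"

definition fsteps_le :: "decls \<Rightarrow> nat \<Rightarrow> fexp \<Rightarrow> fexp \<Rightarrow> bool" where
  "fsteps_le D k e v \<longleftrightarrow> fval v \<and> (\<exists>j\<le>k. (fstep D ^^ j) e v)"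

section \<open>Target language (TL)\<close>

datatype con = KS sname | KI iname | KTup nat

text \<open>Ordinary (bindable) TL variables: translated FG variables and auxiliary ones.
  Method variables \<open>m_{t_S}\<close> form a separate sort \<open>TMeth m t_S\<close>.\<close>
datatype tlvar = VX vname | VAux nat

datatype texp =
    TVar tlvar
  | TMeth mname sname
  | TCon con
  | TApp texp texp
  | TLam tlvar texp
  | TCase texp "((con \<times> tlvar list) \<times> texp) list"

type_synonym msub = "(mname \<times> sname) \<rightharpoonup> texp"

definition capp :: "con \<Rightarrow> texp list \<Rightarrow> texp" where
  "capp K Es = foldl TApp (TCon K) Es"

definition tuple :: "texp list \<Rightarrow> texp" where
  "tuple Es = capp (KTup (length Es)) Es"

fun is_tvar :: "texp \<Rightarrow> bool" where
  "is_tvar (TVar _) = True"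
| "is_tvar (TMeth _ _) = True"
| "is_tvar _ = False"

fun cval :: "texp \<Rightarrow> bool" where
  "cval (TCon _) = True"
| "cval (TApp f a) = (cval f \<and> (is_tvar a \<or> cval a))"
| "cval _ = False"

definition tval :: "texp \<Rightarrow> bool" where
  "tval e \<longleftrightarrow> is_tvar e \<or> cval e"

fun fv :: "texp \<Rightarrow> tlvar set" where
  "fv (TVar x) = {x}"
| "fv (TMeth m s) = {}"
| "fv (TCon K) = {}"
| "fv (TApp a b) = fv a \<union> fv b"
| "fv (TLam x e) = fv e - {x}"
| "fv (TCase e cls) = fv e \<union> \<Union> (set (map (\<lambda>c. fv (snd c) - set (snd (fst c))) cls))"

definition fresh :: "tlvar set \<Rightarrow> tlvar" where
  "fresh A = VAux (LEAST n. VAux n \<notin> A)"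

fun ren :: "tlvar set \<Rightarrow> tlvar list \<Rightarrow> tlvar list" where
  "ren A [] = []"
| "ren A (x # xs) = (let x' = (if x \<in> A then fresh A else x) in x' # ren (insert x' A) xs)"

fun tsubst :: "(tlvar \<Rightarrow> texp) \<Rightarrow> texp \<Rightarrow> texp" where
  "tsubst \<sigma> (TVar x) = \<sigma> x"
| "tsubst \<sigma> (TMeth m s) = TMeth m s"
| "tsubst \<sigma> (TCon K) = TCon K"
| "tsubst \<sigma> (TApp a b) = TApp (tsubst \<sigma> a) (tsubst \<sigma> b)"
| "tsubst \<sigma> (TLam x e) =
     (let A = \<Union> (fv ` \<sigma> ` (fv e - {x}));
          x' = (if x \<in> A then fresh A else x)
      in TLam x' (tsubst (\<sigma>(x := TVar x')) e))"
| "tsubst \<sigma> (TCase e cls) =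
     TCase (tsubst \<sigma> e)
       (map (\<lambda>c.
          (let xs = snd (fst c);
               A = \<Union> (fv ` \<sigma> ` (fv (snd c) - set xs));
               xs' = ren A xs
           in ((fst (fst c), xs'), tsubst (upds \<sigma> xs (map TVar xs')) (snd c)))) cls)"

inductive tstep :: "msub \<Rightarrow> texp \<Rightarrow> texp \<Rightarrow> bool" for \<sigma>m where
  beta: "tval V \<Longrightarrow> tstep \<sigma>m (TApp (TLam x E) V) (tsubst (TVar(x := V)) E)"
| case_red: "\<lbrakk> list_all tval Vs; ((K, xs), E') \<in> set cls; length xs = length Vs \<rbrakk>
             \<Longrightarrow> tstep \<sigma>m (TCase (capp K Vs) cls) (tsubst (upds TVar xs Vs) E')"
| meth: "\<sigma>m (m, s) = Some L \<Longrightarrow> tstep \<sigma>m (TApp (TMeth m s) E) (TApp L E)"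
| ctx_appL: "tstep \<sigma>m E1 E1' \<Longrightarrow> tstep \<sigma>m (TApp E1 E2) (TApp E1' E2)"
| ctx_appR: "\<lbrakk> tval V; tstep \<sigma>m E E' \<rbrakk> \<Longrightarrow> tstep \<sigma>m (TApp V E) (TApp V E')"
| ctx_case: "tstep \<sigma>m E E' \<Longrightarrow> tstep \<sigma>m (TCase E cls) (TCase E' cls)"

definition tsteps_le :: "msub \<Rightarrow> nat \<Rightarrow> texp \<Rightarrow> texp \<Rightarrow> bool" where
  "tsteps_le \<sigma>m k E V \<longleftrightarrow> tval V \<and> (\<exists>j\<le>k. (tstep \<sigma>m ^^ j) E V)"

definition method_subst :: "msub \<Rightarrow> bool" where
  "method_subst \<sigma>m \<longleftrightarrow> finite (dom \<sigma>m) \<and> (\<forall>Y L. \<sigma>m Y = Some L \<longrightarrow> (\<exists>x b. L = TLam x b))"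

section \<open>Translation\<close>

text \<open>Nested pattern \<open>case E of K(X1,..,Xn) \<rightarrow> body\<close>, i.e.
  \<open>case E of [K Z \<rightarrow> case Z of [(X1,..,Xn) \<rightarrow> body]]\<close> with \<open>Z = VAux 0\<close>.
  All auxiliary binders are \<open>VAux\<close> variables; these never occur free in
  translations, so they are fresh.\<close>
definition case_tup :: "texp \<Rightarrow> con \<Rightarrow> tlvar list \<Rightarrow> texp \<Rightarrow> texp" where
  "case_tup E K xs body =
     TCase E [((K, [VAux 0]), TCase (TVar (VAux 0)) [((KTup (length xs), xs), body)])]"

inductive subty_tr :: "decls \<Rightarrow> ty \<Rightarrow> ty \<Rightarrow> texp \<Rightarrow> bool" for D where
  struct_iface: "\<lbrakk> TypeIface tI Ss \<in> set D; set Ss \<subseteq> methods D (TS s) \<rbrakk>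
     \<Longrightarrow> subty_tr D (TS s) (TI tI)
           (TLam (VAux 0) (TApp (TCon (KI tI))
              (tuple (TVar (VAux 0) # map (\<lambda>(m, M). TMeth m s) Ss))))"
| iface_iface: "\<lbrakk> TypeIface tI Rs \<in> set D; TypeIface uI Ss \<in> set D;
                  \<forall>i < length Ss. \<pi> i < length Rs \<and> Ss ! i = Rs ! (\<pi> i) \<rbrakk>
     \<Longrightarrow> subty_tr D (TI tI) (TI uI)
           (TLam (VAux 0) (case_tup (TVar (VAux 0)) (KI tI) (map VAux [1..<length Rs + 2])
              (TApp (TCon (KI uI))
                 (tuple (TVar (VAux 1) # map (\<lambda>i. TVar (VAux (\<pi> i + 2))) [0..<length Ss])))))"

definition structs_sub :: "decls \<Rightarrow> iname \<Rightarrow> sname list" where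
  "structs_sub D uI = concat (map (\<lambda>d. case d of
       TypeStruct s fs \<Rightarrow> (if \<exists>E. subty_tr D (TS s) (TI uI) E then [s] else [])
     | _ \<Rightarrow> []) D)"

inductive destr_tr :: "decls \<Rightarrow> iname \<Rightarrow> ty \<Rightarrow> texp \<Rightarrow> bool" for D where
  to_struct: "\<lbrakk> TypeIface tI Rs \<in> set D; subtype D (TS s) (TI tI) \<rbrakk>
     \<Longrightarrow> destr_tr D tI (TS s)
           (TLam (VAux 0) (case_tup (TVar (VAux 0)) (KI tI) (map VAux [1..<length Rs + 2])
              (TCase (TVar (VAux 1))
                 [((KS s, [VAux (length Rs + 2)]),
                   TApp (TCon (KS s)) (TVar (VAux (length Rs + 2))))])))"
| to_iface: "\<lbrakk> TypeIface tI Rs \<in> set D;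
               list_all2 (\<lambda>s cl. \<exists>Ej. subty_tr D (TS s) (TI uI) Ej \<and>
                    cl = ((KS s, [VAux (length Rs + 2)]),
                          TApp Ej (TApp (TCon (KS s)) (TVar (VAux (length Rs + 2))))))
                 (structs_sub D uI) cls \<rbrakk>
     \<Longrightarrow> destr_tr D tI (TI uI)
           (TLam (VAux 0) (case_tup (TVar (VAux 0)) (KI tI) (map VAux [1..<length Rs + 2])
              (TCase (TVar (VAux 1)) cls)))"

inductive fg_trans :: "decls \<Rightarrow> (vname \<rightharpoonup> ty) \<Rightarrow> fexp \<Rightarrow> ty \<Rightarrow> texp \<Rightarrow> bool"
  for D \<Delta> where
  tr_var: "\<Delta> x = Some t \<Longrightarrow> fg_trans D \<Delta> (Var x) t (TVar (VX x))"
| tr_struct: "\<lbrakk> TypeStruct s fs \<in> set D; length es = length fs; length Es = length fs;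
                \<forall>i < length fs. fg_trans D \<Delta> (es ! i) (snd (fs ! i)) (Es ! i) \<rbrakk>
     \<Longrightarrow> fg_trans D \<Delta> (SLit s es) (TS s) (TApp (TCon (KS s)) (tuple Es))"
| tr_access: "\<lbrakk> fg_trans D \<Delta> e (TS s) E; TypeStruct s fs \<in> set D; i < length fs; fst (fs ! i) = f \<rbrakk>
     \<Longrightarrow> fg_trans D \<Delta> (Field e f) (snd (fs ! i))
           (case_tup E (KS s) (map VAux [1..<length fs + 1]) (TVar (VAux (i + 1))))"
| tr_call_struct: "\<lbrakk> (m, (ps, t)) \<in> methods D (TS s); fg_trans D \<Delta> e (TS s) E;
                     length es = length ps; length Es = length ps;
                     \<forall>i < length ps. fg_trans D \<Delta> (es ! i) (snd (ps ! i)) (Es ! i) \<rbrakk>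
     \<Longrightarrow> fg_trans D \<Delta> (Call e m es) t (TApp (TApp (TMeth m s) E) (tuple Es))"
| tr_call_iface: "\<lbrakk> fg_trans D \<Delta> e (TI tI) E; TypeIface tI Ss \<in> set D; j < length Ss;
                    Ss ! j = (m, (ps, t));
                    length es = length ps; length Es = length ps;
                    \<forall>i < length ps. fg_trans D \<Delta> (es ! i) (snd (ps ! i)) (Es ! i) \<rbrakk>
     \<Longrightarrow> fg_trans D \<Delta> (Call e m es) t
           (case_tup E (KI tI) (map VAux [1..<length Ss + 2])
              (TApp (TApp (TVar (VAux (j + 2))) (TVar (VAux 1))) (tuple Es)))"
| tr_sub: "\<lbrakk> fg_trans D \<Delta> e t E2; subty_tr D t u E1 \<rbrakk> \<Longrightarrow> fg_trans D \<Delta> e u (TApp E1 E2)"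
| tr_assert: "\<lbrakk> fg_trans D \<Delta> e (TI tI) E2; destr_tr D tI u E1 \<rbrakk>
     \<Longrightarrow> fg_trans D \<Delta> (Assert e u) u (TApp E1 E2)"

section \<open>Step-indexed logical relation\<close>

type_synonym vrel_fam = "nat \<Rightarrow> ty \<Rightarrow> fexp \<Rightarrow> texp \<Rightarrow> bool"

definition erelP :: "decls \<Rightarrow> msub \<Rightarrow> vrel_fam \<Rightarrow> nat \<Rightarrow> ty \<Rightarrow> fexp \<Rightarrow> texp \<Rightarrow> bool" where
  "erelP D \<sigma>m P k t e E \<longleftrightarrow>
     (\<forall>k1 k2 v V. k1 < k \<longrightarrow> k2 < k \<longrightarrow> k1 + k2 < k \<longrightarrow>
        fsteps_le D k1 e v \<longrightarrow> tsteps_le \<sigma>m k2 E V \<longrightarrow> P (k - k1 - k2) t v V)"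

fun mrelP :: "decls \<Rightarrow> msub \<Rightarrow> vrel_fam \<Rightarrow> nat \<Rightarrow> spec \<Rightarrow> decl \<Rightarrow> texp \<Rightarrow> bool" where
  "mrelP D \<sigma>m P k (m, (ps, t)) (Func x s m' M' e) V \<longleftrightarrow>
     m' = m \<and> M' = (ps, t) \<and>
     (\<forall>k' \<le> k. \<forall>v' V' vs Vs.
        P k' (TS s) v' V' \<longrightarrow> length vs = length ps \<longrightarrow> length Vs = length ps \<longrightarrow>
        (\<forall>i < length ps. P k' (snd (ps ! i)) (vs ! i) (Vs ! i)) \<longrightarrow>
        erelP D \<sigma>m P k' t (fsubst (upds (Var(x := v')) (map fst ps) vs) e)
                           (TApp (TApp V V') (tuple Vs)))"
| "mrelP D \<sigma>m P k S d V \<longleftrightarrow> False"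

text \<open>(Struct) and (Iface) at index \<open>k\<close>, where \<open>P j\<close> is the value relation at
  index \<open>j\<close> (only used for \<open>j < k\<close>); struct recursion is at the same index.\<close>
inductive vrelF :: "decls \<Rightarrow> msub \<Rightarrow> nat \<Rightarrow> vrel_fam \<Rightarrow> ty \<Rightarrow> fexp \<Rightarrow> texp \<Rightarrow> bool"
  for D \<sigma>m k P where
  vstruct: "\<lbrakk> TypeStruct s fs \<in> set D; length vs = length fs; length Vs = length fs;
              \<forall>i < length fs. vrelF D \<sigma>m k P (snd (fs ! i)) (vs ! i) (Vs ! i) \<rbrakk>
     \<Longrightarrow> vrelF D \<sigma>m k P (TS s) (SLit s vs) (TApp (TCon (KS s)) (tuple Vs))"
| viface: "\<lbrakk> TypeIface tI Ss \<in> set D; length Vms = length Ss;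
             fval v; tval V; V = capp (KS u) Vs'; list_all tval Vms;
             \<forall>k1 < k. P k1 (TS u) v V;
             \<forall>k2 < k. \<forall>i < length Ss. \<exists>d. method_lookup D (fst (Ss ! i)) u d \<and>
                                            mrelP D \<sigma>m P k2 (Ss ! i) d (Vms ! i) \<rbrakk>
     \<Longrightarrow> vrelF D \<sigma>m k P (TI tI) v (TApp (TCon (KI tI)) (tuple (V # Vms)))"

primrec vfam :: "decls \<Rightarrow> msub \<Rightarrow> nat \<Rightarrow> vrel_fam" where
  "vfam D \<sigma>m 0 = (\<lambda>_ _ _ _. False)"
| "vfam D \<sigma>m (Suc n) = (vfam D \<sigma>m n)(n := vrelF D \<sigma>m n (vfam D \<sigma>m n))"

definition vrel :: "decls \<Rightarrow> msub \<Rightarrow> nat \<Rightarrow> ty \<Rightarrow> fexp \<Rightarrow> texp \<Rightarrow> bool" where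
  "vrel D \<sigma>m k = vrelF D \<sigma>m k (vfam D \<sigma>m k)"

definition erel :: "decls \<Rightarrow> msub \<Rightarrow> nat \<Rightarrow> ty \<Rightarrow> fexp \<Rightarrow> texp \<Rightarrow> bool" where
  "erel D \<sigma>m = erelP D \<sigma>m (vrel D \<sigma>m)"

definition mrel :: "decls \<Rightarrow> msub \<Rightarrow> nat \<Rightarrow> spec \<Rightarrow> decl \<Rightarrow> texp \<Rightarrow> bool" where
  "mrel D \<sigma>m = mrelP D \<sigma>m (vrel D \<sigma>m)"

definition bindings_rel :: "decls \<Rightarrow> msub \<Rightarrow> (vname \<rightharpoonup> ty) \<Rightarrow> nat \<Rightarrow> (vname \<Rightarrow> fexp) \<Rightarrow> (tlvar \<Rightarrow> texp) \<Rightarrow> bool" where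
  "bindings_rel D \<sigma>m \<Delta> k \<sigma>F \<sigma>V \<longleftrightarrow> (\<forall>x t. \<Delta> x = Some t \<longrightarrow> vrel D \<sigma>m k t (\<sigma>F x) (\<sigma>V (VX x)))"

definition decls_rel :: "decls \<Rightarrow> nat \<Rightarrow> msub \<Rightarrow> bool" where
  "decls_rel D k \<sigma>m \<longleftrightarrow>
     (\<forall>x s m M e. Func x s m M e \<in> set D \<longrightarrow> mrel D \<sigma>m k (m, M) (Func x s m M e) (TMeth m s))"

end

(* Induction on the translation derivation, with one compatibility lemma per rule.  Bind
   lemmas for evaluation contexts reduce each compatibility lemma to the case where the
   subexpressions have already been evaluated to related values; the remaining redexes on both
   sides are then taken by anti-reduction, each step costing one unit of the step index.
   A method call is discharged by the relation on methods, which decls_rel provides for the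
   method variables m_{t_S} and the interface relation provides for the method table of an
   interface value. *)

theory Submission
  imports Defs
begin

section \<open>Capture-avoiding substitution\<close>

lemma finite_fv: "finite (fv e)"
  by (induction e) auto

lemma fresh_notin: "finite A \<Longrightarrow> fresh A \<notin> A"
proof -
  assume "finite A"
  then have "finite (VAux -` A)"
    by (rule finite_vimageI) (simp add: inj_def)
  then have "\<exists>n. n \<notin> VAux -` A"
    using infinite_UNIV_nat by (rule ex_new_if_finite[rotated])
  then show ?thesis
    unfolding fresh_def using LeastI_ex[of "\<lambda>n. VAux n \<notin> A"] by simp
qed

lemma length_ren [simp]: "length (ren A xs) = length xs"
  by (induction xs arbitrary: A) (simp_all add: Let_def)

lemma ren_distinct_fresh: "finite A \<Longrightarrow> distinct (ren A xs) \<and> set (ren A xs) \<inter> A = {}"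
proof (induction xs arbitrary: A)
  case (Cons x xs)
  define x' where "x' = (if x \<in> A then fresh A else x)"
  have "x' \<notin> A"
    using fresh_notin[OF Cons.prems] by (simp add: x'_def)
  moreover have "ren A (x # xs) = x' # ren (insert x' A) xs"
    by (simp add: x'_def Let_def)
  moreover have "distinct (ren (insert x' A) xs) \<and> set (ren (insert x' A) xs) \<inter> insert x' A = {}"
    using Cons.IH Cons.prems by simp
  ultimately show ?case
    by auto
qed simp

lemma ren_id: "distinct xs \<Longrightarrow> set xs \<inter> A = {} \<Longrightarrow> ren A xs = xs"
  by (induction xs arbitrary: A) (auto simp: Let_def)

lemma upds_Cons: "upds \<sigma> (x # xs) (v # vs) = upds (\<sigma>(x := v)) xs vs"
  by (simp add: upds_def)

lemma upds_notin: "y \<notin> set xs \<Longrightarrow> upds \<sigma> xs vs y = \<sigma> y"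
proof (induction xs arbitrary: \<sigma> vs)
  case (Cons x xs)
  then show ?case by (cases vs) (auto simp: upds_def)
qed (simp add: upds_def)

lemma upds_nth:
  "distinct xs \<Longrightarrow> length xs = length vs \<Longrightarrow> i < length xs \<Longrightarrow> upds \<sigma> xs vs (xs ! i) = vs ! i"
proof (induction xs arbitrary: \<sigma> vs i)
  case (Cons x xs)
  then obtain v vs' where vs: "vs = v # vs'"
    by (cases vs) auto
  show ?case
  proof (cases i)
    case 0
    then show ?thesis
      using Cons.prems vs by (simp add: upds_Cons upds_notin)
  next
    case (Suc j)
    then show ?thesis
      using Cons vs by (simp add: upds_Cons)
  qed
qed simp

lemma upds_in: "length xs = length vs \<Longrightarrow> y \<in> set xs \<Longrightarrow> upds \<sigma> xs vs y \<in> set vs"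
proof (induction xs arbitrary: \<sigma> vs)
  case (Cons x xs)
  then obtain v vs' where vs: "vs = v # vs'"
    by (cases vs) auto
  show ?case
  proof (cases "y \<in> set xs")
    case True
    then show ?thesis
      using Cons vs by (auto simp: upds_Cons)
  next
    case False
    then show ?thesis
      using Cons vs by (auto simp: upds_Cons upds_notin)
  qed
qed simp

lemma upds_cong:
  "(y \<notin> set xs \<Longrightarrow> \<sigma> y = \<sigma>' y) \<Longrightarrow> length xs = length vs \<Longrightarrow> upds \<sigma> xs vs y = upds \<sigma>' xs vs y"
proof (induction xs arbitrary: \<sigma> \<sigma>' vs)
  case (Cons x xs)
  then obtain v vs' where vs: "vs = v # vs'" and len: "length xs = length vs'"
    by (cases vs) auto
  have "upds (\<sigma>(x := v)) xs vs' y = upds (\<sigma>'(x := v)) xs vs' y"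
    by (rule Cons.IH) (use Cons.prems len in auto)
  then show ?case
    using vs by (simp add: upds_Cons)
qed (simp add: upds_def)

lemma upds_same_vars: "distinct xs \<Longrightarrow> y \<in> set xs \<Longrightarrow> upds \<sigma> xs (map TVar xs) y = TVar y"
proof -
  assume "distinct xs" "y \<in> set xs"
  then obtain i where "i < length xs" "y = xs ! i"
    by (metis in_set_conv_nth)
  with \<open>distinct xs\<close> show ?thesis
    using upds_nth[of xs "map TVar xs" i \<sigma>] by simp
qed

lemma upds_TVar_id: "upds TVar xs (map TVar xs) = TVar"
proof -
  have "upds \<sigma> xs (map TVar xs) = TVar" if "\<sigma> = TVar" for \<sigma>
    using that by (induction xs arbitrary: \<sigma>) (auto simp: upds_def)
  then show ?thesis by simp
qed

definition lam_binder :: "(tlvar \<Rightarrow> texp) \<Rightarrow> tlvar \<Rightarrow> texp \<Rightarrow> tlvar" where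
  "lam_binder \<sigma> x e = (let A = \<Union> (fv ` \<sigma> ` (fv e - {x})) in if x \<in> A then fresh A else x)"

definition subst_clause ::
  "(tlvar \<Rightarrow> texp) \<Rightarrow> (con \<times> tlvar list) \<times> texp \<Rightarrow> (con \<times> tlvar list) \<times> texp" where
  "subst_clause \<sigma> c =
     (let xs = snd (fst c); A = \<Union> (fv ` \<sigma> ` (fv (snd c) - set xs)); xs' = ren A xs
      in ((fst (fst c), xs'), tsubst (upds \<sigma> xs (map TVar xs')) (snd c)))"

lemma tsubst_TLam:
  "tsubst \<sigma> (TLam x e) = TLam (lam_binder \<sigma> x e) (tsubst (\<sigma>(x := TVar (lam_binder \<sigma> x e))) e)"
  by (simp only: tsubst.simps lam_binder_def Let_def)

lemma tsubst_TCase: "tsubst \<sigma> (TCase e cls) = TCase (tsubst \<sigma> e) (map (subst_clause \<sigma>) cls)"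
  unfolding tsubst.simps(6) subst_clause_def[abs_def] by (rule refl)

declare tsubst.simps(5,6) [simp del]

lemma subst_clause_eq:
  "subst_clause \<sigma> ((K, xs), b) =
     (let xs' = ren (\<Union> (fv ` \<sigma> ` (fv b - set xs))) xs
      in ((K, xs'), tsubst (upds \<sigma> xs (map TVar xs')) b))"
  by (simp only: subst_clause_def Let_def fst_conv snd_conv)

lemma fv_clause_subset:
  assumes "((K, xs), b) \<in> set cls"
  shows "fv b - set xs \<subseteq> fv (TCase e cls)"
proof -
  have "fv b - set xs \<in> set (map (\<lambda>c. fv (snd c) - set (snd (fst c))) cls)"
    using imageI[OF assms, of "\<lambda>c. fv (snd c) - set (snd (fst c))"] by simp
  then show ?thesis
    by (simp only: fv.simps) blast
qed

lemma tsubst_cong: "(\<And>y. y \<in> fv e \<Longrightarrow> \<sigma> y = \<sigma>' y) \<Longrightarrow> tsubst \<sigma> e = tsubst \<sigma>' e"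
proof (induction e arbitrary: \<sigma> \<sigma>')
  case (TLam x e)
  then have "\<Union> (fv ` \<sigma> ` (fv e - {x})) = \<Union> (fv ` \<sigma>' ` (fv e - {x}))"
    by auto
  then have same_binder: "lam_binder \<sigma> x e = lam_binder \<sigma>' x e"
    by (simp only: lam_binder_def)
  have "tsubst (\<sigma>(x := TVar x')) e = tsubst (\<sigma>'(x := TVar x')) e" for x'
    by (rule TLam.IH) (use TLam.prems in simp)
  then show ?case
    by (simp only: tsubst_TLam same_binder)
next
  case (TCase e cls)
  have "subst_clause \<sigma> c = subst_clause \<sigma>' c" if c: "c \<in> set cls" for c
  proof -
    obtain K xs b where c_eq: "c = ((K, xs), b)"
      by (metis prod.collapse)
    have agree: "\<sigma> y = \<sigma>' y" if "y \<in> fv b - set xs" for y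
      using TCase.prems fv_clause_subset[of K xs b cls e] c c_eq that by blast
    then have A: "\<Union> (fv ` \<sigma> ` (fv b - set xs)) = \<Union> (fv ` \<sigma>' ` (fv b - set xs))"
      by (metis (no_types, lifting) image_cong)
    define xs' where "xs' = ren (\<Union> (fv ` \<sigma>' ` (fv b - set xs))) xs"
    have "tsubst (upds \<sigma> xs (map TVar xs')) b = tsubst (upds \<sigma>' xs (map TVar xs')) b"
      apply (rule TCase.IH(2)[OF c, of b])
       apply (simp add: c_eq)
      by (rule upds_cong) (use agree in \<open>auto simp: xs'_def\<close>)
    then show ?thesis
      unfolding c_eq subst_clause_eq A Let_def xs'_def by (rule arg_cong)
  qed
  moreover have "tsubst \<sigma> e = tsubst \<sigma>' e"
    by (rule TCase.IH(1)) (use TCase.prems in simp)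
  ultimately show ?case
    by (simp add: tsubst_TCase)
next
  case (TApp a b)
  have "tsubst \<sigma> a = tsubst \<sigma>' a" "tsubst \<sigma> b = tsubst \<sigma>' b"
    by (rule TApp.IH(1), use TApp.prems in simp, rule TApp.IH(2), use TApp.prems in simp)
  then show ?case
    by simp
qed simp_all

lemma fv_subst_clause:
  assumes "\<And>\<sigma>'. fv (tsubst \<sigma>' b) \<subseteq> \<Union> (fv ` \<sigma>' ` fv b)"
  shows "fv (snd (subst_clause \<sigma> ((K, xs), b))) - set (snd (fst (subst_clause \<sigma> ((K, xs), b))))
    \<subseteq> \<Union> (fv ` \<sigma> ` (fv b - set xs))"
proof
  define xs' where "xs' = ren (\<Union> (fv ` \<sigma> ` (fv b - set xs))) xs"
  fix z
  assume "z \<in> fv (snd (subst_clause \<sigma> ((K, xs), b))) - set (snd (fst (subst_clause \<sigma> ((K, xs), b))))"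
  then have z: "z \<in> fv (tsubst (upds \<sigma> xs (map TVar xs')) b)" "z \<notin> set xs'"
    by (simp_all add: subst_clause_eq xs'_def Let_def)
  then obtain y where y: "y \<in> fv b" "z \<in> fv (upds \<sigma> xs (map TVar xs') y)"
    using assms by blast
  show "z \<in> \<Union> (fv ` \<sigma> ` (fv b - set xs))"
  proof (cases "y \<in> set xs")
    case True
    then have "upds \<sigma> xs (map TVar xs') y \<in> TVar ` set xs'"
      using upds_in[of xs "map TVar xs'"] by (simp add: xs'_def)
    with y z show ?thesis
      by auto
  next
    case False
    then have "z \<in> fv (\<sigma> y)"
      using y(2) upds_notin[OF False, of \<sigma> "map TVar xs'"] by simp
    with y(1) False show ?thesis
      by blast
  qed
qed

lemma fv_tsubst: "fv (tsubst \<sigma> e) \<subseteq> \<Union> (fv ` \<sigma> ` fv e)"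
proof (induction e arbitrary: \<sigma>)
  case (TLam x e)
  have "fv (tsubst (\<sigma>(x := TVar x')) e) - {x'} \<subseteq> \<Union> (fv ` \<sigma> ` (fv e - {x}))" for x'
  proof
    fix z
    assume z: "z \<in> fv (tsubst (\<sigma>(x := TVar x')) e) - {x'}"
    then obtain y where "y \<in> fv e" "z \<in> fv ((\<sigma>(x := TVar x')) y)"
      using TLam.IH by blast
    with z show "z \<in> \<Union> (fv ` \<sigma> ` (fv e - {x}))"
      by (cases "y = x") auto
  qed
  then show ?case
    by (simp add: tsubst_TLam)
next
  case (TCase e cls)
  have "fv (snd (subst_clause \<sigma> c)) - set (snd (fst (subst_clause \<sigma> c)))
          \<subseteq> \<Union> (fv ` \<sigma> ` fv (TCase e cls))" if c: "c \<in> set cls" for c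
  proof -
    obtain K xs b where c_eq: "c = ((K, xs), b)"
      by (metis prod.collapse)
    have "fv (tsubst \<sigma>' b) \<subseteq> \<Union> (fv ` \<sigma>' ` fv b)" for \<sigma>'
      using TCase.IH(2)[OF c, of b] c_eq by simp
    then have "fv (snd (subst_clause \<sigma> c)) - set (snd (fst (subst_clause \<sigma> c)))
        \<subseteq> \<Union> (fv ` \<sigma> ` (fv b - set xs))"
      unfolding c_eq by (rule fv_subst_clause)
    also have "\<dots> \<subseteq> \<Union> (fv ` \<sigma> ` fv (TCase e cls))"
      using fv_clause_subset[of K xs b cls e] c c_eq by (intro Union_mono image_mono) simp
    finally show ?thesis .
  qed
  moreover have "fv (tsubst \<sigma> e) \<subseteq> \<Union> (fv ` \<sigma> ` fv (TCase e cls))"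
    using TCase.IH(1)[of \<sigma>] by auto
  ultimately show ?case
    unfolding tsubst_TCase fv.simps(6)[of "tsubst \<sigma> e"] set_map
    by (intro Un_least Union_least) (assumption, (elim imageE, simp))
next
  case (TApp a b)
  have "fv (tsubst \<sigma> a) \<subseteq> \<Union> (fv ` \<sigma> ` fv a)" "fv (tsubst \<sigma> b) \<subseteq> \<Union> (fv ` \<sigma> ` fv b)"
    by (fact TApp.IH(1), fact TApp.IH(2))
  then show ?case
    by auto
qed simp_all

text \<open>\<^const>\<open>ren\<close> renames repeated pattern variables apart, so \<^const>\<open>tsubst\<close> can only be
  the identity on terms whose case patterns are linear.\<close>

fun linear_pats :: "texp \<Rightarrow> bool" where
  "linear_pats (TApp a b) \<longleftrightarrow> linear_pats a \<and> linear_pats b"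
| "linear_pats (TLam x e) \<longleftrightarrow> linear_pats e"
| "linear_pats (TCase e cls) \<longleftrightarrow>
     linear_pats e \<and> (\<forall>c \<in> set cls. distinct (snd (fst c)) \<and> linear_pats (snd c))"
| "linear_pats _ \<longleftrightarrow> True"

lemma linear_pats_upds:
  assumes "length xs = length xs'" "y \<notin> set xs \<Longrightarrow> linear_pats (\<sigma> y)"
  shows "linear_pats (upds \<sigma> xs (map TVar xs') y)"
proof (cases "y \<in> set xs")
  case True
  then have "upds \<sigma> xs (map TVar xs') y \<in> set (map TVar xs')"
    using upds_in[of xs "map TVar xs'"] assms(1) by simp
  then show ?thesis
    by auto
next
  case False
  then show ?thesis
    using assms(2) upds_notin[OF False, of \<sigma> "map TVar xs'"] by simp
qed

lemma linear_pats_tsubst: "(\<And>y. y \<in> fv e \<Longrightarrow> linear_pats (\<sigma> y)) \<Longrightarrow> linear_pats (tsubst \<sigma> e)"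
proof (induction e arbitrary: \<sigma>)
  case (TLam x e)
  have "linear_pats (tsubst (\<sigma>(x := TVar (lam_binder \<sigma> x e))) e)"
    by (rule TLam.IH) (use TLam.prems in simp)
  then show ?case
    by (simp add: tsubst_TLam)
next
  case (TCase e cls)
  have "distinct (snd (fst (subst_clause \<sigma> c))) \<and> linear_pats (snd (subst_clause \<sigma> c))"
    if c: "c \<in> set cls" for c
  proof -
    obtain K xs b where c_eq: "c = ((K, xs), b)"
      by (metis prod.collapse)
    define xs' where "xs' = ren (\<Union> (fv ` \<sigma> ` (fv b - set xs))) xs"
    have distinct: "distinct xs'"
      using ren_distinct_fresh finite_fv by (simp add: xs'_def)
    have "linear_pats (\<sigma> y)" if "y \<in> fv b - set xs" for y
      using TCase.prems fv_clause_subset[of K xs b cls e] c c_eq that by blast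
    then have "linear_pats (tsubst (upds \<sigma> xs (map TVar xs')) b)"
      apply -
      apply (rule TCase.IH(2)[OF c, of b])
       apply (simp add: c_eq)
      by (rule linear_pats_upds) (auto simp: xs'_def)
    with distinct show ?thesis
      unfolding c_eq subst_clause_eq xs'_def[symmetric] Let_def by simp
  qed
  moreover have "linear_pats (tsubst \<sigma> e)"
    by (rule TCase.IH(1)) (use TCase.prems in simp)
  ultimately show ?case
    by (simp add: tsubst_TCase)
next
  case (TApp a b)
  have "linear_pats (tsubst \<sigma> a)" "linear_pats (tsubst \<sigma> b)"
    by (rule TApp.IH(1), use TApp.prems in simp, rule TApp.IH(2), use TApp.prems in simp)
  then show ?case
    by simp
qed simp_all

lemma tsubst_TVar: "linear_pats e \<Longrightarrow> tsubst TVar e = e"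
proof (induction e)
  case (TLam x e)
  have "lam_binder TVar x e = x"
    unfolding lam_binder_def Let_def by auto
  with TLam show ?case
    by (simp add: tsubst_TLam)
next
  case (TCase e cls)
  have "subst_clause TVar c = c" if c: "c \<in> set cls" for c
  proof -
    obtain K xs b where c_eq: "c = ((K, xs), b)"
      by (metis prod.collapse)
    have linear: "distinct xs" "linear_pats b"
      using TCase.prems c c_eq by auto
    have "\<Union> (fv ` TVar ` (fv b - set xs)) = fv b - set xs"
      by auto
    moreover have "ren (fv b - set xs) xs = xs"
      by (rule ren_id) (use linear in auto)
    moreover have "tsubst TVar b = b"
      using TCase.IH(2)[OF c, of b] c_eq linear by simp
    ultimately show ?thesis
      unfolding c_eq subst_clause_eq by (simp add: upds_TVar_id)
  qed
  then have "map (subst_clause TVar) cls = cls"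
    by (simp add: map_idI)
  with TCase show ?case
    by (simp add: tsubst_TCase)
qed simp_all

lemma tsubst_id: "linear_pats e \<Longrightarrow> (\<And>y. y \<in> fv e \<Longrightarrow> \<sigma> y = TVar y) \<Longrightarrow> tsubst \<sigma> e = e"
  using tsubst_cong[of e \<sigma> TVar] tsubst_TVar by simp

lemma tsubst_closed: "linear_pats e \<Longrightarrow> fv e = {} \<Longrightarrow> tsubst \<sigma> e = e"
  using tsubst_id[of e \<sigma>] by simp

lemma subst_clause_id:
  assumes "distinct xs" "linear_pats b" "\<And>y. y \<in> fv b - set xs \<Longrightarrow> \<sigma> y = TVar y"
  shows "subst_clause \<sigma> ((K, xs), b) = ((K, xs), b)"
proof -
  have "\<Union> (fv ` \<sigma> ` (fv b - set xs)) = fv b - set xs"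
    using assms(3) by force
  moreover have "ren (fv b - set xs) xs = xs"
    by (rule ren_id) (use assms(1) in auto)
  moreover have "tsubst (upds \<sigma> xs (map TVar xs)) b = b"
  proof (rule tsubst_id[OF assms(2)])
    show "upds \<sigma> xs (map TVar xs) y = TVar y" if "y \<in> fv b" for y
      using that assms(1,3) upds_same_vars[of xs y \<sigma>] upds_notin[of y xs \<sigma>] by (cases "y \<in> set xs") auto
  qed
  ultimately show ?thesis
    unfolding subst_clause_eq by simp
qed

lemma tsubst_TCase_fixed_clauses:
  assumes "\<And>K xs b. ((K, xs), b) \<in> set cls \<Longrightarrow>
             distinct xs \<and> linear_pats b \<and> (\<forall>y \<in> fv b - set xs. \<sigma> y = TVar y)"
  shows "tsubst \<sigma> (TCase e cls) = TCase (tsubst \<sigma> e) cls"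
proof -
  have "map (subst_clause \<sigma>) cls = cls"
  proof (rule map_idI)
    fix c
    assume "c \<in> set cls"
    moreover obtain K xs b where "c = ((K, xs), b)"
      by (metis prod.collapse)
    ultimately show "subst_clause \<sigma> c = c"
      using assms subst_clause_id by blast
  qed
  then show ?thesis
    by (simp add: tsubst_TCase)
qed

lemma tsubst_case_tup:
  assumes "distinct xs" "fv b \<subseteq> set xs" "linear_pats b"
  shows "tsubst \<sigma> (case_tup E K xs b) = case_tup (tsubst \<sigma> E) K xs b"
proof -
  have "tsubst \<sigma> (TCase (TVar (VAux 0)) [((KTup (length xs), xs), b)])
          = TCase (TVar (VAux 0)) [((KTup (length xs), xs), b)]" if "\<sigma> (VAux 0) = TVar (VAux 0)" for \<sigma>
    using that assms by (subst tsubst_TCase_fixed_clauses) auto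
  then show ?thesis
    unfolding case_tup_def using assms by (subst tsubst_TCase_fixed_clauses) auto
qed

lemma tsubst_foldl: "tsubst \<sigma> (foldl TApp h Es) = foldl TApp (tsubst \<sigma> h) (map (tsubst \<sigma>) Es)"
  by (induction Es arbitrary: h) simp_all

lemma tsubst_capp: "tsubst \<sigma> (capp K Es) = capp K (map (tsubst \<sigma>) Es)"
  by (simp add: capp_def tsubst_foldl)

lemma tsubst_tuple: "tsubst \<sigma> (tuple Es) = tuple (map (tsubst \<sigma>) Es)"
  by (simp add: tuple_def tsubst_capp)

lemma fv_foldl: "fv (foldl TApp h Es) = fv h \<union> \<Union> (fv ` set Es)"
  by (induction Es arbitrary: h) auto

lemma fv_tuple: "fv (tuple Es) = \<Union> (fv ` set Es)"
  by (simp add: tuple_def capp_def fv_foldl)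

lemma linear_pats_foldl: "linear_pats (foldl TApp h Es) \<longleftrightarrow> linear_pats h \<and> list_all linear_pats Es"
  by (induction Es arbitrary: h) auto

lemma linear_pats_tuple: "linear_pats (tuple Es) \<longleftrightarrow> list_all linear_pats Es"
  by (simp add: tuple_def capp_def linear_pats_foldl)

lemma cval_foldl: "cval (foldl TApp h Es) \<longleftrightarrow> cval h \<and> list_all tval Es"
  by (induction Es arbitrary: h) (auto simp: tval_def)

lemma tval_capp: "tval (capp K Es) \<longleftrightarrow> list_all tval Es"
proof -
  have "\<not> is_tvar (capp K Es)"
    by (cases Es rule: rev_exhaust) (simp_all add: capp_def)
  then show ?thesis
    by (simp add: tval_def capp_def cval_foldl)
qed

lemma tval_tuple: "tval (tuple Es) \<longleftrightarrow> list_all tval Es"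
  by (simp add: tuple_def tval_capp)

lemma tval_TApp_TCon: "tval (TApp (TCon K) X) \<longleftrightarrow> tval X"
  by (simp add: tval_def)

lemma linear_pats_tval: "tval V \<Longrightarrow> linear_pats V"
proof -
  have "cval V \<Longrightarrow> linear_pats V" for V
    by (induction V rule: cval.induct) (auto simp: tval_def elim: is_tvar.elims)
  then show "tval V \<Longrightarrow> linear_pats V"
    unfolding tval_def by (auto elim: is_tvar.elims)
qed

lemma capp_inj: "capp K Vs = capp K' Vs' \<Longrightarrow> K = K' \<and> Vs = Vs'"
proof (induction Vs arbitrary: Vs' rule: rev_induct)
  case Nil
  then show ?case
    by (cases Vs' rule: rev_exhaust) (simp_all add: capp_def)
next
  case (snoc x xs)
  then show ?case
    by (cases Vs' rule: rev_exhaust) (simp_all add: capp_def)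
qed

lemma capp_single: "capp K [Y] = TApp (TCon K) Y"
  by (simp add: capp_def)

lemma capp_snoc: "capp K (Es @ [E]) = TApp (capp K Es) E"
  by (simp add: capp_def)

lemma capp_not_TLam: "capp K Es \<noteq> TLam x b"
  by (cases Es rule: rev_exhaust) (simp_all add: capp_def)

lemma capp_not_TMeth: "capp K Es \<noteq> TMeth m s"
  by (cases Es rule: rev_exhaust) (simp_all add: capp_def)

lemma relpowp_normal:
  assumes "(R ^^ n) a c" "\<And>b. \<not> R a b"
  shows "n = 0 \<and> c = a"
proof (cases n)
  case (Suc m)
  then show ?thesis
    using assms relpowp_Suc_D2[of m R a c] by auto
qed (use assms in simp)

lemma tval_no_tstep: "tstep \<sigma>m V W \<Longrightarrow> \<not> tval V"
  by (induction rule: tstep.induct) (simp_all add: tval_def)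

lemma tsteps_from_tval: "(tstep \<sigma>m ^^ n) V W \<Longrightarrow> tval V \<Longrightarrow> n = 0 \<and> W = V"
  using relpowp_normal tval_no_tstep by metis

lemma fval_no_fstep: "fstep D v w \<Longrightarrow> \<not> fval v"
  by (induction rule: fstep.induct) auto

lemma fsteps_from_fval: "(fstep D ^^ n) v w \<Longrightarrow> fval v \<Longrightarrow> n = 0 \<and> w = v"
  using relpowp_normal fval_no_fstep by metis

lemma tstep_TAppE:
  assumes "tstep \<sigma>m (TApp A X) W"
  obtains (beta) x b where "A = TLam x b" "tval X" "W = tsubst (TVar(x := X)) b"
  | (meth) m s L where "A = TMeth m s" "\<sigma>m (m, s) = Some L" "W = TApp L X"
  | (left) A' where "tstep \<sigma>m A A'" "W = TApp A' X"
  | (right) X' where "tval A" "tstep \<sigma>m X X'" "W = TApp A X'"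
  using assms by (cases rule: tstep.cases) auto

lemma tstep_TCaseE:
  assumes "tstep \<sigma>m (TCase E cls) W"
  obtains (red) K Vs xs B where "E = capp K Vs" "list_all tval Vs" "((K, xs), B) \<in> set cls"
      "length xs = length Vs" "W = tsubst (upds TVar xs Vs) B"
  | (ctx) E' where "tstep \<sigma>m E E'" "W = TCase E' cls"
  using assms by (cases rule: tstep.cases) auto

lemma no_tstep_TLam: "\<not> tstep \<sigma>m (TLam x b) W"
  by (auto elim: tstep.cases)

lemma no_tstep_TMeth: "\<not> tstep \<sigma>m (TMeth m s) W"
  by (auto elim: tstep.cases)

lemma tstep_beta_inv: "tstep \<sigma>m (TApp (TLam x b) X) W \<Longrightarrow> tval X \<and> W = tsubst (TVar(x := X)) b"
  by (erule tstep_TAppE) (auto simp: no_tstep_TLam tval_def)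

lemma tstep_case_value:
  assumes "tstep \<sigma>m (TCase (capp K Vs) cls) W" "list_all tval Vs"
  obtains xs B where "((K, xs), B) \<in> set cls" "length xs = length Vs" "W = tsubst (upds TVar xs Vs) B"
  using assms(1)
proof (cases rule: tstep_TCaseE)
  case (red K' Vs' xs B)
  then show ?thesis
    using capp_inj[OF red(1)] that by auto
next
  case (ctx E')
  then show ?thesis
    using tval_no_tstep assms(2) tval_capp by blast
qed

lemma tstep_capp_inv:
  "tstep \<sigma>m (capp K Es) W \<Longrightarrow> \<exists>i E'. i < length Es \<and> tstep \<sigma>m (Es ! i) E' \<and> W = capp K (Es[i := E'])"
proof (induction Es arbitrary: W rule: rev_induct)
  case Nil
  then show ?case
    by (auto simp: capp_def elim: tstep.cases)
next
  case (snoc E Es)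
  from snoc.prems have "tstep \<sigma>m (TApp (capp K Es) E) W"
    by (simp add: capp_snoc)
  then show ?case
  proof (cases rule: tstep_TAppE)
    case (left A')
    then obtain i E' where "i < length Es" "tstep \<sigma>m (Es ! i) E'" "A' = capp K (Es[i := E'])"
      using snoc.IH by blast
    with left show ?thesis
      by (intro exI[of _ i] exI[of _ E']) (simp add: nth_append list_update_append1 capp_snoc)
  next
    case (right X')
    then show ?thesis
      by (intro exI[of _ "length Es"] exI[of _ X']) (simp add: capp_snoc)
  qed (simp_all add: capp_not_TLam capp_not_TMeth)
qed

lemma fstep_SLit_inv:
  assumes "fstep D (SLit s es) w"
  shows "\<exists>i e'. i < length es \<and> fstep D (es ! i) e' \<and> w = SLit s (es[i := e'])"
proof -
  obtain vs e e' rest where "es = vs @ e # rest" "fstep D e e'" "w = SLit s (vs @ e' # rest)"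
    using assms by (cases rule: fstep.cases) auto
  then show ?thesis
    by (intro exI[of _ "length vs"] exI[of _ e']) (auto simp: list_update_append)
qed

lemma fstep_Call_args_inv:
  assumes "fstep D (Call v m es) w" "fval v" "\<not> list_all fval es"
  shows "\<exists>i e'. i < length es \<and> fstep D (es ! i) e' \<and> w = Call v m (es[i := e'])"
proof -
  obtain vs e e' rest where "es = vs @ e # rest" "fstep D e e'" "w = Call v m (vs @ e' # rest)"
    using assms by (cases rule: fstep.cases) (auto dest: fval_no_fstep)
  then show ?thesis
    by (intro exI[of _ "length vs"] exI[of _ e']) (auto simp: list_update_append)
qed

section \<open>Evaluation contexts\<close>

text \<open>\<open>C\<close> is an evaluation context for \<open>R\<close> if every reduction of \<open>C e\<close> to a value can
  be rearranged to first reduce \<open>e\<close> to a value.  Contexts of the reduction relations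
  are such contexts, but also the argument position of an application whose function part
  may still step.\<close>

definition eval_ctx :: "('a \<Rightarrow> 'a \<Rightarrow> bool) \<Rightarrow> ('a \<Rightarrow> bool) \<Rightarrow> ('a \<Rightarrow> 'a) \<Rightarrow> bool" where
  "eval_ctx R val C \<longleftrightarrow>
     (\<forall>n e w. (R ^^ n) (C e) w \<longrightarrow> val w \<longrightarrow>
        (\<exists>a v. a \<le> n \<and> val v \<and> (R ^^ a) e v \<and> (R ^^ (n - a)) (C v) w))"

definition eval_ctx_list :: "('a \<Rightarrow> 'a \<Rightarrow> bool) \<Rightarrow> ('a \<Rightarrow> bool) \<Rightarrow> ('a list \<Rightarrow> 'a) \<Rightarrow> bool" where
  "eval_ctx_list R val C \<longleftrightarrow>
     (\<forall>n es w. (R ^^ n) (C es) w \<longrightarrow> val w \<longrightarrow>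
        (\<exists>vs ns. length vs = length es \<and> length ns = length es \<and> list_all val vs \<and>
           (\<forall>i < length es. (R ^^ (ns ! i)) (es ! i) (vs ! i)) \<and>
           sum_list ns \<le> n \<and> (R ^^ (n - sum_list ns)) (C vs) w))"

lemma eval_ctxD:
  assumes "eval_ctx R val C" "(R ^^ n) (C e) w" "val w"
  obtains a v where "a \<le> n" "val v" "(R ^^ a) e v" "(R ^^ (n - a)) (C v) w"
  using assms unfolding eval_ctx_def by blast

lemma eval_ctx_listD:
  assumes "eval_ctx_list R val C" "(R ^^ n) (C es) w" "val w"
  obtains vs ns where "length vs = length es" "length ns = length es" "list_all val vs"
    "\<forall>i < length es. (R ^^ (ns ! i)) (es ! i) (vs ! i)" "sum_list ns \<le> n"
    "(R ^^ (n - sum_list ns)) (C vs) w"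
  using assms unfolding eval_ctx_list_def by blast

lemma eval_ctx_id: "eval_ctx R val (\<lambda>e. e)"
  unfolding eval_ctx_def by force

text \<open>The context \<open>C c\<close> may also change its own state \<open>c\<close>, provided the step can be
  replayed after the hole has been filled by a value.\<close>

lemma eval_ctx_stateI:
  assumes step: "\<And>c e w. P c \<Longrightarrow> R (C c e) w \<Longrightarrow> \<not> val e \<Longrightarrow>
      (\<exists>e'. R e e' \<and> w = C c e') \<or> (\<exists>c'. P c' \<and> w = C c' e \<and> (\<forall>v. val v \<longrightarrow> R (C c v) (C c' v)))"
    and not_val: "\<And>c e. P c \<Longrightarrow> \<not> val e \<Longrightarrow> \<not> val (C c e)"
    and "P c"
  shows "eval_ctx R val (C c)"
  unfolding eval_ctx_def
proof (intro allI impI)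
  fix n e w
  assume "(R ^^ n) (C c e) w" "val w"
  with \<open>P c\<close> show "\<exists>a v. a \<le> n \<and> val v \<and> (R ^^ a) e v \<and> (R ^^ (n - a)) (C c v) w"
  proof (induction n arbitrary: c e)
    case 0
    then show ?case
      using not_val by (intro exI[of _ 0] exI[of _ e]) auto
  next
    case (Suc n)
    show ?case
    proof (cases "val e")
      case True
      with Suc.prems show ?thesis
        by (intro exI[of _ 0] exI[of _ e]) auto
    next
      case False
      from Suc.prems(2) obtain w1 where w1: "R (C c e) w1" and rest: "(R ^^ n) w1 w"
        by (rule relpowp_Suc_E2)
      from step[OF Suc.prems(1) w1 False] show ?thesis
      proof (elim disjE exE conjE)
        fix e'
        assume "R e e'" "w1 = C c e'"
        with Suc.IH[OF Suc.prems(1)] rest Suc.prems(3) obtain a v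
          where "a \<le> n" "val v" "(R ^^ a) e' v" "(R ^^ (n - a)) (C c v) w"
          by blast
        moreover from \<open>R e e'\<close> this(3) have "(R ^^ Suc a) e v"
          by (rule relpowp_Suc_I2)
        ultimately show ?thesis
          by (intro exI[of _ "Suc a"] exI[of _ v]) auto
      next
        fix c'
        assume c': "P c'" "w1 = C c' e" "\<forall>v. val v \<longrightarrow> R (C c v) (C c' v)"
        with Suc.IH[OF c'(1)] rest Suc.prems(3) obtain a v
          where av: "a \<le> n" "val v" "(R ^^ a) e v" "(R ^^ (n - a)) (C c' v) w"
          by blast
        from av(2) c'(3) have "R (C c v) (C c' v)"
          by blast
        then have "(R ^^ Suc (n - a)) (C c v) w"
          using av(4) by (rule relpowp_Suc_I2)
        with av show ?thesis
          by (intro exI[of _ a] exI[of _ v]) (simp add: Suc_diff_le)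
      qed
    qed
  qed
qed

lemma eval_ctxI:
  assumes "\<And>e w. R (C e) w \<Longrightarrow> \<not> val e \<Longrightarrow> \<exists>e'. R e e' \<and> w = C e'"
    and "\<And>e. \<not> val e \<Longrightarrow> \<not> val (C e)"
  shows "eval_ctx R val C"
proof -
  have "eval_ctx R val ((\<lambda>_. C) ())"
  proof (rule eval_ctx_stateI[where P = "\<lambda>_. True"])
    fix c :: unit and e w
    assume "R ((\<lambda>_. C) c e) w" "\<not> val e"
    then have "\<exists>e'. R e e' \<and> w = C e'"
      by (intro assms(1)) simp_all
    then show "(\<exists>e'. R e e' \<and> w = (\<lambda>_. C) c e') \<or>
        (\<exists>c'. True \<and> w = (\<lambda>_. C) c' e \<and> (\<forall>v. val v \<longrightarrow> R ((\<lambda>_. C) c v) ((\<lambda>_. C) c' v)))"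
      by simp
  qed (simp_all add: assms(2))
  then show ?thesis
    by simp
qed

lemma sum_list_update_Suc:
  "i < length ns \<Longrightarrow> sum_list (ns[i := Suc (ns ! i)]) = Suc (sum_list (ns :: nat list))"
  by (induction ns arbitrary: i) (auto split: nat.splits)

lemma relpowp_list_update_step:
  assumes "i < length es" "R (es ! i) e'" "length ns = length es"
    and "\<forall>j < length es. (R ^^ (ns ! j)) (es[i := e'] ! j) (vs ! j)"
  shows "\<forall>j < length es. (R ^^ (ns[i := Suc (ns ! i)] ! j)) (es ! j) (vs ! j)"
proof (intro allI impI)
  fix j
  assume "j < length es"
  show "(R ^^ (ns[i := Suc (ns ! i)] ! j)) (es ! j) (vs ! j)"
  proof (cases "j = i")
    case True
    have "(R ^^ (ns ! i)) e' (vs ! i)"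
      using assms(1,4) by auto
    with assms(2) have "(R ^^ Suc (ns ! i)) (es ! i) (vs ! i)"
      by (rule relpowp_Suc_I2)
    with True assms(1,3) show ?thesis
      by simp
  next
    case False
    then show ?thesis
      using assms(4)[rule_format, OF \<open>j < length es\<close>] by simp
  qed
qed

lemma eval_ctx_listI:
  assumes step: "\<And>es w. R (C es) w \<Longrightarrow> \<not> list_all val es \<Longrightarrow>
      \<exists>i e'. i < length es \<and> R (es ! i) e' \<and> w = C (es[i := e'])"
    and not_val: "\<And>es. \<not> list_all val es \<Longrightarrow> \<not> val (C es)"
  shows "eval_ctx_list R val C"
  unfolding eval_ctx_list_def
proof (intro allI impI)
  fix n es w
  assume "(R ^^ n) (C es) w" "val w"
  then show "\<exists>vs ns. length vs = length es \<and> length ns = length es \<and> list_all val vs \<and>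
      (\<forall>i < length es. (R ^^ (ns ! i)) (es ! i) (vs ! i)) \<and>
      sum_list ns \<le> n \<and> (R ^^ (n - sum_list ns)) (C vs) w"
  proof (induction n arbitrary: es)
    case 0
    then have "list_all val es"
      using not_val by auto
    with 0 show ?case
      by (intro exI[of _ es] exI[of _ "replicate (length es) 0"]) (simp add: sum_list_replicate)
  next
    case (Suc n)
    show ?case
    proof (cases "list_all val es")
      case True
      with Suc.prems show ?thesis
        by (intro exI[of _ es] exI[of _ "replicate (length es) 0"]) (simp add: sum_list_replicate)
    next
      case False
      from Suc.prems(1) obtain w1 where w1: "R (C es) w1" and rest: "(R ^^ n) w1 w"
        by (rule relpowp_Suc_E2)
      from step[OF w1 False] obtain i e' where i: "i < length es" "R (es ! i) e'" "w1 = C (es[i := e'])"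
        by blast
      with Suc.IH[of "es[i := e']"] rest Suc.prems(2) obtain vs ns where IH:
        "length vs = length es" "length ns = length es" "list_all val vs"
        "\<forall>j < length es. (R ^^ (ns ! j)) (es[i := e'] ! j) (vs ! j)" "sum_list ns \<le> n"
        "(R ^^ (n - sum_list ns)) (C vs) w"
        by auto
      define ns' where "ns' = ns[i := Suc (ns ! i)]"
      have "\<forall>j < length es. (R ^^ (ns' ! j)) (es ! j) (vs ! j)"
        unfolding ns'_def using i(1,2) IH(2,4) by (rule relpowp_list_update_step)
      moreover have "sum_list ns' = Suc (sum_list ns)"
        unfolding ns'_def using sum_list_update_Suc i(1) IH(2) by simp
      ultimately show ?thesis
        using IH by (intro exI[of _ vs] exI[of _ ns']) (simp add: ns'_def)
    qed
  qed
qed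

lemma eval_ctx_list_compose:
  assumes outer: "eval_ctx R val C1" and inner: "eval_ctx_list R val C2"
    and val_C2: "\<And>vs. list_all val vs \<Longrightarrow> val (C2 vs)"
    and val_normal: "\<And>v w. val v \<Longrightarrow> \<not> R v w"
  shows "eval_ctx_list R val (\<lambda>es. C1 (C2 es))"
  unfolding eval_ctx_list_def
proof (intro allI impI)
  fix n es w
  assume "(R ^^ n) (C1 (C2 es)) w" "val w"
  then obtain a v where a: "a \<le> n" "val v" "(R ^^ a) (C2 es) v" "(R ^^ (n - a)) (C1 v) w"
    by (rule eval_ctxD[OF outer])
  from inner a(3,2) obtain vs ns where vs: "length vs = length es" "length ns = length es"
    "list_all val vs" "\<forall>i < length es. (R ^^ (ns ! i)) (es ! i) (vs ! i)" "sum_list ns \<le> a"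
    "(R ^^ (a - sum_list ns)) (C2 vs) v"
    by (rule eval_ctx_listD)
  have "a - sum_list ns = 0 \<and> v = C2 vs"
    using relpowp_normal[OF vs(6)] val_normal val_C2[OF vs(3)] by blast
  with a vs show "\<exists>vs ns. length vs = length es \<and> length ns = length es \<and> list_all val vs \<and>
      (\<forall>i < length es. (R ^^ (ns ! i)) (es ! i) (vs ! i)) \<and>
      sum_list ns \<le> n \<and> (R ^^ (n - sum_list ns)) (C1 (C2 vs)) w"
    by (intro exI[of _ vs] exI[of _ ns]) auto
qed

lemma eval_ctx_Call_recv: "eval_ctx (fstep D) fval (\<lambda>e. Call e m es)"
  by (rule eval_ctxI) (auto elim: fstep.cases)

lemma eval_ctx_Field: "eval_ctx (fstep D) fval (\<lambda>e. Field e f)"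
  by (rule eval_ctxI) (auto elim: fstep.cases)

lemma eval_ctx_Assert: "eval_ctx (fstep D) fval (\<lambda>e. Assert e t)"
  by (rule eval_ctxI) (auto elim: fstep.cases)

lemma eval_ctx_list_SLit: "eval_ctx_list (fstep D) fval (SLit s)"
  by (rule eval_ctx_listI) (use fstep_SLit_inv in blast, simp)

lemma eval_ctx_list_Call_args: "fval v \<Longrightarrow> eval_ctx_list (fstep D) fval (Call v m)"
  by (rule eval_ctx_listI) (use fstep_Call_args_inv in blast, simp)

lemma eval_ctx_TApp_arg: "eval_ctx (tstep \<sigma>m) tval (TApp A)"
proof (rule eval_ctx_stateI[where P = "\<lambda>_. True"])
  fix A X W
  assume "tstep \<sigma>m (TApp A X) W" "\<not> tval X"
  then show "(\<exists>X'. tstep \<sigma>m X X' \<and> W = TApp A X') \<or>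
      (\<exists>A'. True \<and> W = TApp A' X \<and> (\<forall>V. tval V \<longrightarrow> tstep \<sigma>m (TApp A V) (TApp A' V)))"
  proof (cases rule: tstep_TAppE)
    case (meth m s L)
    then show ?thesis
      by (blast intro: tstep.meth)
  next
    case (left A')
    then show ?thesis
      by (blast intro: tstep.ctx_appL)
  qed auto
qed (auto simp: tval_def)

lemma eval_ctx_TCase: "eval_ctx (tstep \<sigma>m) tval (\<lambda>E. TCase E cls)"
proof (rule eval_ctxI)
  fix E W
  assume "tstep \<sigma>m (TCase E cls) W" "\<not> tval E"
  then show "\<exists>E'. tstep \<sigma>m E E' \<and> W = TCase E' cls"
    by (cases rule: tstep_TCaseE) (auto simp: tval_capp)
qed (simp add: tval_def)

lemma eval_ctx_case_tup: "eval_ctx (tstep \<sigma>m) tval (\<lambda>E. case_tup E K xs b)"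
  unfolding case_tup_def by (rule eval_ctx_TCase)

text \<open>The receiver of a translated method call \<open>m_{t_S} E (E_1, \<dots>, E_n)\<close>: the method variable
  is a TL value, so \<open>E\<close> reduces in place, and a lookup of \<open>m_{t_S}\<close> made before \<open>E\<close> is a
  value can be postponed.\<close>

lemma eval_ctx_method_recv:
  assumes "method_subst \<sigma>m"
  shows "eval_ctx (tstep \<sigma>m) tval (\<lambda>E. TApp (TApp (TMeth m s) E) Y)"
proof -
  let ?P = "\<lambda>A. (\<exists>m s. A = TMeth m s) \<or> (\<exists>x b. A = TLam x b)"
  have "eval_ctx (tstep \<sigma>m) tval (\<lambda>E. TApp (TApp A E) Y)" if "?P A" for A
  proof (rule eval_ctx_stateI[where P = ?P, OF _ _ that])
    fix A E W
    assume P: "?P A" and st: "tstep \<sigma>m (TApp (TApp A E) Y) W" and E: "\<not> tval E"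
    have "\<not> tval (TApp A E)"
      using P by (auto simp: tval_def)
    with st obtain A1 where A1: "tstep \<sigma>m (TApp A E) A1" "W = TApp A1 Y"
      by (cases rule: tstep_TAppE) auto
    from A1(1) show "(\<exists>E'. tstep \<sigma>m E E' \<and> W = TApp (TApp A E') Y) \<or>
        (\<exists>A'. ?P A' \<and> W = TApp (TApp A' E) Y \<and>
           (\<forall>V. tval V \<longrightarrow> tstep \<sigma>m (TApp (TApp A V) Y) (TApp (TApp A' V) Y)))"
    proof (cases rule: tstep_TAppE)
      case (meth m s L)
      then have "?P L"
        using assms unfolding method_subst_def by blast
      moreover have "tstep \<sigma>m (TApp (TApp A V) Y) (TApp (TApp L V) Y)" for V
        using meth by (blast intro: tstep.meth tstep.ctx_appL)
      ultimately show ?thesis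
        using meth A1(2) by blast
    next
      case (left A')
      then show ?thesis
        using P by (auto simp: no_tstep_TLam no_tstep_TMeth)
    qed (use E A1(2) in auto)
  qed (simp add: tval_def)
  then show ?thesis
    by blast
qed

lemma eval_ctx_list_tuple: "eval_ctx_list (tstep \<sigma>m) tval tuple"
proof (rule eval_ctx_listI)
  fix Es W
  assume "tstep \<sigma>m (tuple Es) W"
  then show "\<exists>i E'. i < length Es \<and> tstep \<sigma>m (Es ! i) E' \<and> W = tuple (Es[i := E'])"
    unfolding tuple_def using tstep_capp_inv by fastforce
qed (simp add: tval_tuple)

lemma eval_ctx_list_TApp_tuple: "eval_ctx_list (tstep \<sigma>m) tval (\<lambda>Es. TApp A (tuple Es))"
  using eval_ctx_TApp_arg eval_ctx_list_tuple
  by (rule eval_ctx_list_compose) (auto simp: tval_tuple dest: tval_no_tstep)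

lemma distinct_concat_map_shared:
  "distinct (concat (map f xs)) \<Longrightarrow> x \<in> set xs \<Longrightarrow> y \<in> set xs \<Longrightarrow>
   a \<in> set (f x) \<Longrightarrow> a \<in> set (f y) \<Longrightarrow> x = y"
proof (induction xs)
  case (Cons z zs)
  have disj: "set (f z) \<inter> (\<Union>w \<in> set zs. set (f w)) = {}" and "distinct (concat (map f zs))"
    using Cons.prems(1) by auto
  with Cons.IH Cons.prems(2-5) show ?case
    by auto
qed simp

lemma wf_struct_unique:
  "wf_decls D \<Longrightarrow> TypeStruct s fs \<in> set D \<Longrightarrow> TypeStruct s fs' \<in> set D \<Longrightarrow> fs = fs'"
  using distinct_concat_map_shared[of "\<lambda>d. case d of TypeStruct s fs \<Rightarrow> [s] | _ \<Rightarrow> []" D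
      "TypeStruct s fs" "TypeStruct s fs'" s]
  unfolding wf_decls_def struct_names_def by simp

lemma wf_iface_unique:
  "wf_decls D \<Longrightarrow> TypeIface t Ss \<in> set D \<Longrightarrow> TypeIface t Ss' \<in> set D \<Longrightarrow> Ss = Ss'"
  using distinct_concat_map_shared[of "\<lambda>d. case d of TypeIface t Ss \<Rightarrow> [t] | _ \<Rightarrow> []" D
      "TypeIface t Ss" "TypeIface t Ss'" t]
  unfolding wf_decls_def iface_names_def by simp

lemma wf_func_unique:
  "wf_decls D \<Longrightarrow> Func x s m M e \<in> set D \<Longrightarrow> Func x' s m M' e' \<in> set D \<Longrightarrow>
   x = x' \<and> M = M' \<and> e = e'"
  using distinct_concat_map_shared[of "\<lambda>d. case d of Func x s m M e \<Rightarrow> [(s, m)] | _ \<Rightarrow> []" D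
      "Func x s m M e" "Func x' s m M' e'" "(s, m)"]
  unfolding wf_decls_def func_keys_def by simp

lemma wf_field_unique:
  "wf_decls D \<Longrightarrow> TypeStruct s fs \<in> set D \<Longrightarrow> i < length fs \<Longrightarrow> j < length fs \<Longrightarrow>
   fst (fs ! i) = fst (fs ! j) \<Longrightarrow> i = j"
  unfolding wf_decls_def using nth_eq_iff_index_eq[of "map fst fs" i j] by auto

lemma fstep_Field_SLit:
  assumes "wf_decls D" "TypeStruct s fs \<in> set D" "i < length fs" "fst (fs ! i) = f"
    "list_all fval vs" "fstep D (Field (SLit s vs) f) w"
  shows "w = vs ! i"
  using assms(6)
proof (cases rule: fstep.cases)
  case (field fs' i')
  then have "fs' = fs"
    using wf_struct_unique assms(1,2) by blast
  with field assms have "i' = i"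
    using wf_field_unique by metis
  with field show ?thesis
    by simp
qed (use assms(5) fval_no_fstep[of D "SLit s vs"] in auto)

lemma fstep_Assert_value: "fval v \<Longrightarrow> fstep D (Assert v t) w \<Longrightarrow> w = v"
  by (auto elim: fstep.cases dest: fval_no_fstep)

lemma fstep_Call_SLit:
  assumes "wf_decls D" "Func x s m (ps, t) b \<in> set D" "list_all fval vs0" "list_all fval vs"
    "fstep D (Call (SLit s vs0) m vs) w"
  shows "w = fsubst (upds (Var(x := SLit s vs0)) (map fst ps) vs) b"
  using assms(5)
proof (cases rule: fstep.cases)
  case (call x' ps' t' b')
  then show ?thesis
    using wf_func_unique[OF assms(1,2)] by (metis prod.inject)
next
  case (ctx_recv e')
  then show ?thesis
    using assms(3) fval_no_fstep by fastforce
next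
  case (ctx_arg vs' e es e')
  then show ?thesis
    using assms(4) fval_no_fstep by auto
qed

section \<open>The logical relation\<close>

lemma vfam_lt: "j < k \<Longrightarrow> vfam D \<sigma>m k j = vrel D \<sigma>m j"
  by (induction k) (auto simp: vrel_def less_Suc_eq)

lemma erelP_cong: "(\<And>j. j \<le> k \<Longrightarrow> P j = Q j) \<Longrightarrow> erelP D \<sigma>m P k t e E = erelP D \<sigma>m Q k t e E"
  unfolding erelP_def by (intro iffI allI impI) simp_all

lemma mrelP_cong:
  assumes "\<And>j. j \<le> k \<Longrightarrow> P j = Q j"
  shows "mrelP D \<sigma>m P k S d V = mrelP D \<sigma>m Q k S d V"
proof -
  obtain m ps t where S: "S = (m, (ps, t))"
    by (metis prod.collapse)
  show ?thesis
  proof (cases d)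
    case (Func x s m' M' e)
    have "erelP D \<sigma>m P k' = erelP D \<sigma>m Q k'" if "k' \<le> k" for k'
      using erelP_cong assms that by (intro ext) (meson le_trans)
    with assms show ?thesis
      unfolding S Func mrelP.simps by (intro conj_cong refl) (auto simp del: erelP_def)
  qed (simp_all add: S)
qed

lemma mrelP_vfam: "j < k \<Longrightarrow> mrelP D \<sigma>m (vfam D \<sigma>m k) j S d V = mrel D \<sigma>m j S d V"
  unfolding mrel_def by (rule mrelP_cong) (simp add: vfam_lt)

lemma mrel_mono: "mrel D \<sigma>m k S d V \<Longrightarrow> j \<le> k \<Longrightarrow> mrel D \<sigma>m j S d V"
proof -
  assume "mrel D \<sigma>m k S d V" "j \<le> k"
  moreover obtain m ps t where "S = (m, (ps, t))"
    by (metis prod.collapse)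
  ultimately show ?thesis
    unfolding mrel_def by (cases d) (auto intro: le_trans)
qed

lemma vrel_mono: "vrel D \<sigma>m k t v V \<Longrightarrow> j \<le> k \<Longrightarrow> vrel D \<sigma>m j t v V"
proof -
  have "vrelF D \<sigma>m j (vfam D \<sigma>m j) t v V"
    if "vrelF D \<sigma>m k P t v V" "P = vfam D \<sigma>m k" "j \<le> k" for P
    using that
  proof (induction rule: vrelF.induct)
    case (vstruct s fs vs Vs)
    then show ?case
      by (intro vrelF.vstruct) auto
  next
    case (viface tI Ss Vms v V u Vs')
    then show ?case
      by (intro vrelF.viface) (auto simp: vfam_lt mrelP_vfam)
  qed
  then show "vrel D \<sigma>m k t v V \<Longrightarrow> j \<le> k \<Longrightarrow> vrel D \<sigma>m j t v V"
    unfolding vrel_def by blast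
qed

lemma vrel_values: "vrel D \<sigma>m k t v V \<Longrightarrow> fval v \<and> tval V"
proof -
  have "fval v \<and> tval V" if "vrelF D \<sigma>m k P t v V" for P
    using that
  proof (induction rule: vrelF.induct)
    case (vstruct s fs vs Vs)
    then have "list_all fval vs" "list_all tval Vs"
      by (auto simp: list_all_length)
    then show ?case
      by (simp add: tval_TApp_TCon tval_tuple)
  next
    case (viface tI Ss Vms v V u Vs')
    then show ?case
      by (simp add: tval_TApp_TCon tval_tuple)
  qed
  then show "vrel D \<sigma>m k t v V \<Longrightarrow> fval v \<and> tval V"
    unfolding vrel_def by blast
qed

lemma list_all_fval_args:
  "length vs = length ps \<Longrightarrow> \<forall>i < length ps. vrel D \<sigma>m j (ts i) (vs ! i) (Vs ! i) \<Longrightarrow> list_all fval vs"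
  using vrel_values by (auto simp: list_all_length)

lemma vrel_TSE:
  assumes "vrel D \<sigma>m k (TS s) v V"
  obtains fs vs Vs where "TypeStruct s fs \<in> set D" "v = SLit s vs"
    "V = TApp (TCon (KS s)) (tuple Vs)" "length vs = length fs" "length Vs = length fs"
    "\<forall>i < length fs. vrel D \<sigma>m k (snd (fs ! i)) (vs ! i) (Vs ! i)"
  using assms unfolding vrel_def by (cases rule: vrelF.cases) (auto simp: vrel_def)

lemma vrel_TIE:
  assumes "vrel D \<sigma>m k (TI tI) v V"
  obtains Ss W Vms u Vs' where "TypeIface tI Ss \<in> set D" "V = TApp (TCon (KI tI)) (tuple (W # Vms))"
    "length Vms = length Ss" "list_all tval Vms" "fval v" "tval W" "W = capp (KS u) Vs'"
    "\<forall>j < k. vrel D \<sigma>m j (TS u) v W"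
    "\<forall>j < k. \<forall>i < length Ss. \<exists>d. method_lookup D (fst (Ss ! i)) u d \<and> mrel D \<sigma>m j (Ss ! i) d (Vms ! i)"
  using assms[unfolded vrel_def]
proof (cases rule: vrelF.cases)
  case (viface Ss Vms W u Vs')
  show ?thesis
    by (rule that[of Ss W Vms u Vs']) (use viface in \<open>simp_all add: vfam_lt mrelP_vfam\<close>)
qed

lemma vrel_TSI:
  assumes "TypeStruct s fs \<in> set D" "length vs = length fs" "length Vs = length fs"
    "\<forall>i < length fs. vrel D \<sigma>m k (snd (fs ! i)) (vs ! i) (Vs ! i)"
  shows "vrel D \<sigma>m k (TS s) (SLit s vs) (TApp (TCon (KS s)) (tuple Vs))"
  unfolding vrel_def by (rule vrelF.vstruct) (use assms in \<open>simp_all add: vrel_def\<close>)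

lemma vrel_TII:
  assumes "TypeIface tI Ss \<in> set D" "length Vms = length Ss" "list_all tval Vms"
    "fval v" "tval W" "W = capp (KS u) Vs'"
    "\<forall>j < k. vrel D \<sigma>m j (TS u) v W"
    "\<forall>j < k. \<forall>i < length Ss. \<exists>d. method_lookup D (fst (Ss ! i)) u d \<and> mrel D \<sigma>m j (Ss ! i) d (Vms ! i)"
  shows "vrel D \<sigma>m k (TI tI) v (TApp (TCon (KI tI)) (tuple (W # Vms)))"
  unfolding vrel_def by (rule vrelF.viface) (use assms in \<open>simp_all add: vfam_lt mrelP_vfam\<close>)

lemma erelI:
  assumes "\<And>n1 n v V. n1 + n < k \<Longrightarrow> (fstep D ^^ n1) e v \<Longrightarrow> fval v \<Longrightarrow>
      (tstep \<sigma>m ^^ n) E V \<Longrightarrow> tval V \<Longrightarrow> vrel D \<sigma>m (k - n1 - n) t v V"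
  shows "erel D \<sigma>m k t e E"
  unfolding erel_def erelP_def fsteps_le_def tsteps_le_def
proof (intro allI impI, elim conjE exE)
  fix k1 k2 v V j1 j2
  assume "k1 + k2 < k" "fval v" "tval V" "j1 \<le> k1" "(fstep D ^^ j1) e v" "j2 \<le> k2" "(tstep \<sigma>m ^^ j2) E V"
  then have "vrel D \<sigma>m (k - j1 - j2) t v V"
    by (intro assms) simp_all
  then show "vrel D \<sigma>m (k - k1 - k2) t v V"
    by (rule vrel_mono) (use \<open>j1 \<le> k1\<close> \<open>j2 \<le> k2\<close> in simp)
qed

lemma erelD:
  assumes "erel D \<sigma>m k t e E" "n1 + n < k" "(fstep D ^^ n1) e v" "fval v" "(tstep \<sigma>m ^^ n) E V" "tval V"
  shows "vrel D \<sigma>m (k - n1 - n) t v V"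
proof -
  have "fsteps_le D n1 e v" "tsteps_le \<sigma>m n E V"
    using assms(3-6) unfolding fsteps_le_def tsteps_le_def by auto
  moreover have "n1 < k" "n < k"
    using assms(2) by simp_all
  ultimately show ?thesis
    using assms(1,2) unfolding erel_def erelP_def by simp
qed

lemma erel_value:
  assumes "vrel D \<sigma>m k t v V"
  shows "erel D \<sigma>m k t v V"
proof (rule erelI)
  fix n1 n v' V'
  assume "(fstep D ^^ n1) v v'" "(tstep \<sigma>m ^^ n) V V'"
  then have "n1 = 0 \<and> v' = v" "n = 0 \<and> V' = V"
    using vrel_values[OF assms] fsteps_from_fval tsteps_from_tval by blast+
  with assms show "vrel D \<sigma>m (k - n1 - n) t v' V'"
    by simp
qed

lemma erel_mono: "erel D \<sigma>m k t e E \<Longrightarrow> j \<le> k \<Longrightarrow> erel D \<sigma>m j t e E"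
proof (rule erelI)
  fix n1 n v V
  assume "erel D \<sigma>m k t e E" "j \<le> k" "n1 + n < j" "(fstep D ^^ n1) e v" "fval v"
    "(tstep \<sigma>m ^^ n) E V" "tval V"
  then have "vrel D \<sigma>m (k - n1 - n) t v V"
    by (intro erelD[of D \<sigma>m k]) simp_all
  then show "vrel D \<sigma>m (j - n1 - n) t v V"
    by (rule vrel_mono) (use \<open>j \<le> k\<close> in simp)
qed

lemma erel_zero: "erel D \<sigma>m 0 t e E"
  by (rule erelI) simp

lemma erel_fstep_back:
  assumes "\<And>w. fstep D e w \<Longrightarrow> erel D \<sigma>m (k - 1) t w E" "\<not> fval e"
  shows "erel D \<sigma>m k t e E"
proof (rule erelI)
  fix n1 n v V
  assume n: "n1 + n < k" and steps: "(fstep D ^^ n1) e v" "fval v" "(tstep \<sigma>m ^^ n) E V" "tval V"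
  obtain m where "n1 = Suc m"
    using steps(1,2) assms(2) by (cases n1) auto
  with steps(1) obtain w where "fstep D e w" "(fstep D ^^ m) w v"
    using relpowp_Suc_D2 by metis
  with assms(1) n steps(2-4) \<open>n1 = Suc m\<close> show "vrel D \<sigma>m (k - n1 - n) t v V"
    using erelD[of D \<sigma>m "k - 1" t w E m n v V] by simp
qed

lemma erel_tstep_back:
  assumes "\<And>W. tstep \<sigma>m E W \<Longrightarrow> erel D \<sigma>m (k - 1) t e W" "\<not> tval E"
  shows "erel D \<sigma>m k t e E"
proof (rule erelI)
  fix n1 n v V
  assume n: "n1 + n < k" and steps: "(fstep D ^^ n1) e v" "fval v" "(tstep \<sigma>m ^^ n) E V" "tval V"
  obtain m where "n = Suc m"
    using steps(3,4) assms(2) by (cases n) auto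
  with steps(3) obtain W where "tstep \<sigma>m E W" "(tstep \<sigma>m ^^ m) W V"
    using relpowp_Suc_D2 by metis
  with assms(1) n steps(1,2,4) \<open>n = Suc m\<close> show "vrel D \<sigma>m (k - n1 - n) t v V"
    using erelD[of D \<sigma>m "k - 1" t e W n1 m v V] by simp
qed

lemma erel_bind:
  assumes "erel D \<sigma>m k t e E"
    and "eval_ctx (fstep D) fval CF" "eval_ctx (tstep \<sigma>m) tval CT"
    and cont: "\<And>j v V. 0 < j \<Longrightarrow> j \<le> k \<Longrightarrow> vrel D \<sigma>m j t v V \<Longrightarrow> erel D \<sigma>m j u (CF v) (CT V)"
  shows "erel D \<sigma>m k u (CF e) (CT E)"
proof (rule erelI)
  fix n1 n w W
  assume n: "n1 + n < k" and "(fstep D ^^ n1) (CF e) w" "fval w" "(tstep \<sigma>m ^^ n) (CT E) W" "tval W"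
  then obtain a1 v a2 V where
    F: "a1 \<le> n1" "fval v" "(fstep D ^^ a1) e v" "(fstep D ^^ (n1 - a1)) (CF v) w" and
    T: "a2 \<le> n" "tval V" "(tstep \<sigma>m ^^ a2) E V" "(tstep \<sigma>m ^^ (n - a2)) (CT V) W"
    using eval_ctxD[OF assms(2)] eval_ctxD[OF assms(3)] by metis
  define j where "j = k - a1 - a2"
  have "vrel D \<sigma>m j t v V"
    unfolding j_def by (rule erelD[OF assms(1) _ F(3,2) T(3,2)]) (use n F(1) T(1) in simp)
  then have "erel D \<sigma>m j u (CF v) (CT V)"
    by (intro cont) (use n F(1) T(1) in \<open>simp_all add: j_def\<close>)
  then have "vrel D \<sigma>m (j - (n1 - a1) - (n - a2)) u w W"
    by (rule erelD) (use n F T \<open>fval w\<close> \<open>tval W\<close> in \<open>simp_all add: j_def\<close>)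
  then show "vrel D \<sigma>m (k - n1 - n) u w W"
    using F(1) T(1) by (simp add: j_def)
qed

lemma erel_bind_list:
  assumes "length es = length ts" "length Es = length ts"
    and "\<forall>i < length ts. erel D \<sigma>m k (ts ! i) (es ! i) (Es ! i)"
    and "eval_ctx_list (fstep D) fval CF" "eval_ctx_list (tstep \<sigma>m) tval CT"
    and cont: "\<And>j vs Vs. 0 < j \<Longrightarrow> j \<le> k \<Longrightarrow> length vs = length ts \<Longrightarrow> length Vs = length ts \<Longrightarrow>
      \<forall>i < length ts. vrel D \<sigma>m j (ts ! i) (vs ! i) (Vs ! i) \<Longrightarrow> erel D \<sigma>m j u (CF vs) (CT Vs)"
  shows "erel D \<sigma>m k u (CF es) (CT Es)"
proof (rule erelI)
  fix n1 n w W
  assume n: "n1 + n < k" and "(fstep D ^^ n1) (CF es) w" "fval w" "(tstep \<sigma>m ^^ n) (CT Es) W" "tval W"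
  then obtain vs ns1 Vs ns2 where
    F: "length vs = length es" "length ns1 = length es" "list_all fval vs"
      "\<forall>i < length es. (fstep D ^^ (ns1 ! i)) (es ! i) (vs ! i)" "sum_list ns1 \<le> n1"
      "(fstep D ^^ (n1 - sum_list ns1)) (CF vs) w" and
    T: "length Vs = length Es" "length ns2 = length Es" "list_all tval Vs"
      "\<forall>i < length Es. (tstep \<sigma>m ^^ (ns2 ! i)) (Es ! i) (Vs ! i)" "sum_list ns2 \<le> n"
      "(tstep \<sigma>m ^^ (n - sum_list ns2)) (CT Vs) W"
    using eval_ctx_listD[OF assms(4)] eval_ctx_listD[OF assms(5)] by metis
  define j where "j = k - sum_list ns1 - sum_list ns2"
  have "vrel D \<sigma>m j (ts ! i) (vs ! i) (Vs ! i)" if i: "i < length ts" for i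
  proof -
    have le: "ns1 ! i \<le> sum_list ns1" "ns2 ! i \<le> sum_list ns2"
      using elem_le_sum_list[of i ns1] elem_le_sum_list[of i ns2] i F(2) T(2) assms(1,2) by simp_all
    have "vrel D \<sigma>m (k - ns1 ! i - ns2 ! i) (ts ! i) (vs ! i) (Vs ! i)"
      by (rule erelD[of D \<sigma>m k]) (use assms(1-3) i le n F T in \<open>auto simp: list_all_length\<close>)
    then show ?thesis
      by (rule vrel_mono) (use le in \<open>simp add: j_def\<close>)
  qed
  then have "erel D \<sigma>m j u (CF vs) (CT Vs)"
    by (intro cont) (use n F(1,5) T(1,5) assms(1,2) in \<open>simp_all add: j_def\<close>)
  then have "vrel D \<sigma>m (j - (n1 - sum_list ns1) - (n - sum_list ns2)) u w W"
    by (rule erelD) (use n F T \<open>fval w\<close> \<open>tval W\<close> in \<open>simp_all add: j_def\<close>)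
  then show "vrel D \<sigma>m (k - n1 - n) u w W"
    using F(5) T(5) by (simp add: j_def)
qed

lemma erel_nested_case_back:
  assumes "erel D \<sigma>m (k - 2) t e (tsubst (upds TVar xs Ys) b)"
    and "list_all tval Ys" "length xs = length Ys" "distinct xs" "linear_pats b" "z \<notin> fv b - set xs"
  shows "erel D \<sigma>m k t e
           (TCase (TApp (TCon K) (tuple Ys)) [((K, [z]), TCase (TVar z) [((KTup (length xs), xs), b)])])"
proof (rule erel_tstep_back)
  fix W
  assume "tstep \<sigma>m (TCase (TApp (TCon K) (tuple Ys))
            [((K, [z]), TCase (TVar z) [((KTup (length xs), xs), b)])]) W"
  then have "tstep \<sigma>m (TCase (capp K [tuple Ys])
      [((K, [z]), TCase (TVar z) [((KTup (length xs), xs), b)])]) W"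
    by (simp only: capp_single)
  then have "W = tsubst (upds TVar [z] [tuple Ys]) (TCase (TVar z) [((KTup (length xs), xs), b)])"
    by (rule tstep_case_value) (use assms(2) in \<open>auto simp: tval_tuple\<close>)
  also have "\<dots> = TCase (tuple Ys) [((KTup (length xs), xs), b)]"
  proof -
    have "upds TVar [z] [tuple Ys] = TVar(z := tuple Ys)"
      by (simp add: upds_def)
    moreover have "tsubst (TVar(z := tuple Ys)) (TCase (TVar z) [((KTup (length xs), xs), b)])
        = TCase (tuple Ys) [((KTup (length xs), xs), b)]"
      by (rule trans[OF tsubst_TCase_fixed_clauses]) (use assms(4-6) in auto)
    ultimately show ?thesis
      by simp
  qed
  finally have W: "W = TCase (tuple Ys) [((KTup (length xs), xs), b)]" .
  show "erel D \<sigma>m (k - 1) t e W"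
    unfolding W
  proof (rule erel_tstep_back)
    fix W'
    assume "tstep \<sigma>m (TCase (tuple Ys) [((KTup (length xs), xs), b)]) W'"
    then have "tstep \<sigma>m (TCase (capp (KTup (length Ys)) Ys) [((KTup (length xs), xs), b)]) W'"
      by (simp only: tuple_def)
    then have "W' = tsubst (upds TVar xs Ys) b"
      by (rule tstep_case_value) (use assms(2,3) in auto)
    then show "erel D \<sigma>m (k - 1 - 1) t e W'"
      using assms(1) by (simp add: diff_diff_left numeral_2_eq_2)
  qed (simp add: tval_def)
qed (simp add: tval_def)

lemma erel_case_tup_back:
  assumes "erel D \<sigma>m (k - 2) t e (tsubst (upds TVar xs Ys) b)"
    and "list_all tval Ys" "length xs = length Ys" "distinct xs" "linear_pats b" "fv b \<subseteq> set xs"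
  shows "erel D \<sigma>m k t e (case_tup (TApp (TCon K) (tuple Ys)) K xs b)"
  unfolding case_tup_def using assms by (intro erel_nested_case_back) auto

lemma erel_lam_case_tup_back:
  assumes "erel D \<sigma>m (k - 3) t e (tsubst (upds TVar xs Ys) b)"
    and "list_all tval Ys" "length xs = length Ys" "distinct xs" "linear_pats b" "fv b \<subseteq> set xs"
  shows "erel D \<sigma>m k t e
           (TApp (TLam (VAux 0) (case_tup (TVar (VAux 0)) K xs b)) (TApp (TCon K) (tuple Ys)))"
proof (rule erel_tstep_back)
  fix W
  assume "tstep \<sigma>m (TApp (TLam (VAux 0) (case_tup (TVar (VAux 0)) K xs b)) (TApp (TCon K) (tuple Ys))) W"
  then have "W = tsubst (TVar(VAux 0 := TApp (TCon K) (tuple Ys))) (case_tup (TVar (VAux 0)) K xs b)"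
    by (blast dest: tstep_beta_inv)
  also have "\<dots> = case_tup (TApp (TCon K) (tuple Ys)) K xs b"
    using assms(4-6) by (simp add: tsubst_case_tup)
  finally show "erel D \<sigma>m (k - 1) t e W"
    using assms by (simp add: erel_case_tup_back numeral_3_eq_3 numeral_2_eq_2 diff_diff_left)
qed (simp add: tval_def)

section \<open>Translated coercions and type assertions\<close>

declare upt_Suc [simp del]

lemma distinct_map_VAux: "distinct (map VAux [a..<b])"
  by (simp add: distinct_map inj_on_def)

lemma upds_VAux_range:
  "length Ys = n \<Longrightarrow> i < n \<Longrightarrow> upds \<sigma> (map VAux [a..<a + n]) Ys (VAux (a + i)) = Ys ! i"
  using upds_nth[of "map VAux [a..<a + n]" Ys i \<sigma>] distinct_map_VAux by simp

lemma fv_case_tup: "fv (case_tup E K xs b) = fv E \<union> (fv b - set xs - {VAux 0})"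
  by (auto simp: case_tup_def)

lemma linear_pats_case_tup: "linear_pats (case_tup E K xs b) \<longleftrightarrow> linear_pats E \<and> distinct xs \<and> linear_pats b"
  by (simp add: case_tup_def)

lemma closed_lam_case_tup:
  "fv b \<subseteq> set xs \<Longrightarrow> linear_pats b \<Longrightarrow> distinct xs \<Longrightarrow>
   fv (TLam (VAux 0) (case_tup (TVar (VAux 0)) K xs b)) = {} \<and>
   linear_pats (TLam (VAux 0) (case_tup (TVar (VAux 0)) K xs b))"
  by (auto simp: fv_case_tup linear_pats_case_tup)

definition iface_coercion_body :: "iname \<Rightarrow> (nat \<Rightarrow> nat) \<Rightarrow> nat \<Rightarrow> texp" where
  "iface_coercion_body uI \<pi> q =
     TApp (TCon (KI uI)) (tuple (TVar (VAux 1) # map (\<lambda>i. TVar (VAux (\<pi> i + 2))) [0..<q]))"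

lemma iface_coercion_body_closed:
  assumes "\<forall>i < q. \<pi> i < n"
  shows "fv (iface_coercion_body uI \<pi> q) \<subseteq> set (map VAux [1..<n + 2])"
    and "linear_pats (iface_coercion_body uI \<pi> q)"
  using assms by (auto simp: iface_coercion_body_def fv_tuple linear_pats_tuple list_all_iff)

lemma tsubst_iface_coercion_body:
  assumes "\<forall>i < q. \<pi> i < length Vms"
  shows "tsubst (upds TVar (map VAux [1..<length Vms + 2]) (W # Vms)) (iface_coercion_body uI \<pi> q) =
         TApp (TCon (KI uI)) (tuple (W # map (\<lambda>i. Vms ! \<pi> i) [0..<q]))"
proof -
  let ?\<sigma> = "upds TVar (map VAux [1..<length Vms + 2]) (W # Vms)"
  have W: "?\<sigma> (VAux 1) = W"
    using upds_VAux_range[of "W # Vms" "length Vms + 1" 0 TVar 1] by simp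
  have "?\<sigma> (VAux (\<pi> i + 2)) = Vms ! \<pi> i" if "i < q" for i
    using upds_VAux_range[of "W # Vms" "length Vms + 1" "\<pi> i + 1" TVar 1] assms that by simp
  then have Vms: "map (\<lambda>i. ?\<sigma> (VAux (\<pi> i + 2))) [0..<q] = map (\<lambda>i. Vms ! \<pi> i) [0..<q]"
    by simp
  show ?thesis
    by (simp only: iface_coercion_body_def tsubst.simps tsubst_tuple list.map map_map comp_def
        W Vms)
qed

lemma subty_trE:
  assumes "subty_tr D t u E1"
  obtains (struct_iface) s tI Ss where "t = TS s" "u = TI tI" "TypeIface tI Ss \<in> set D"
      "set Ss \<subseteq> methods D (TS s)"
      "E1 = TLam (VAux 0) (TApp (TCon (KI tI)) (tuple (TVar (VAux 0) # map (\<lambda>(m, M). TMeth m s) Ss)))"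
  | (iface_iface) tI uI Rs Ss \<pi> where "t = TI tI" "u = TI uI" "TypeIface tI Rs \<in> set D"
      "TypeIface uI Ss \<in> set D" "\<forall>i < length Ss. \<pi> i < length Rs \<and> Ss ! i = Rs ! \<pi> i"
      "E1 = TLam (VAux 0) (case_tup (TVar (VAux 0)) (KI tI) (map VAux [1..<length Rs + 2])
              (iface_coercion_body uI \<pi> (length Ss)))"
  using assms
proof (cases rule: subty_tr.cases)
  case (struct_iface tI Ss s)
  with that(1) show ?thesis
    by blast
next
  case (iface_iface tI Rs uI Ss \<pi>)
  then show ?thesis
    using that(2)[of tI uI Rs Ss \<pi>] by (simp add: iface_coercion_body_def)
qed

lemma subty_tr_closed:
  assumes "subty_tr D t u E1"
  shows "fv E1 = {} \<and> linear_pats E1"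
  using assms
proof (cases rule: subty_trE)
  case (struct_iface s tI Ss)
  then show ?thesis
    by (auto simp: fv_tuple linear_pats_tuple list_all_iff split: prod.splits)
next
  case (iface_iface tI uI Rs Ss \<pi>)
  then have "\<forall>i < length Ss. \<pi> i < length Rs"
    by simp
  then show ?thesis
    unfolding iface_iface(6)
    by (intro closed_lam_case_tup iface_coercion_body_closed distinct_map_VAux)
qed

definition assert_clause :: "decls \<Rightarrow> ty \<Rightarrow> nat \<Rightarrow> (con \<times> tlvar list) \<times> texp \<Rightarrow> bool" where
  "assert_clause D u n c \<longleftrightarrow>
     (\<exists>s. fst c = (KS s, [VAux n]) \<and>
        (u = TS s \<and> snd c = TApp (TCon (KS s)) (TVar (VAux n)) \<or>
         (\<exists>uI Ej. u = TI uI \<and> subty_tr D (TS s) (TI uI) Ej \<and>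
            snd c = TApp Ej (TApp (TCon (KS s)) (TVar (VAux n))))))"

lemma assert_clause_closed:
  "assert_clause D u n c \<Longrightarrow> fv (snd c) \<subseteq> set (snd (fst c)) \<and> distinct (snd (fst c)) \<and> linear_pats (snd c)"
  unfolding assert_clause_def using subty_tr_closed by fastforce

lemma assert_match_closed:
  assumes "\<forall>c \<in> set cls. assert_clause D u n c"
  shows "fv (TCase (TVar y) cls) = {y}" "linear_pats (TCase (TVar y) cls)"
  using assert_clause_closed assms by fastforce+

lemma destr_trE:
  assumes "destr_tr D tI u E1"
  obtains Rs cls where "TypeIface tI Rs \<in> set D" "\<forall>c \<in> set cls. assert_clause D u (length Rs + 2) c"
    "E1 = TLam (VAux 0) (case_tup (TVar (VAux 0)) (KI tI) (map VAux [1..<length Rs + 2])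
            (TCase (TVar (VAux 1)) cls))"
  using assms
proof (cases rule: destr_tr.cases)
  case (to_struct Rs s)
  let ?c = "((KS s, [VAux (length Rs + 2)]), TApp (TCon (KS s)) (TVar (VAux (length Rs + 2))))"
  have "assert_clause D u (length Rs + 2) ?c"
    unfolding assert_clause_def using to_struct(1) by simp
  then show ?thesis
    by (intro that[of Rs "[?c]"]) (use to_struct in simp_all)
next
  case (to_iface Rs uI cls)
  have clauses: "assert_clause D u (length Rs + 2) c" if c: "c \<in> set cls" for c
  proof -
    obtain i where "i < length cls" "c = cls ! i"
      using c by (auto simp: in_set_conv_nth)
    moreover have "length cls = length (structs_sub D uI)"
      using list_all2_lengthD[OF to_iface(4)] by simp
    ultimately obtain s Ej where "subty_tr D (TS s) (TI uI) Ej"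
      "c = ((KS s, [VAux (length Rs + 2)]), TApp Ej (TApp (TCon (KS s)) (TVar (VAux (length Rs + 2)))))"
      using list_all2_nthD[OF to_iface(4), of i] by auto
    with to_iface(1) show ?thesis
      unfolding assert_clause_def by simp
  qed
  show ?thesis
    by (intro that[of Rs cls]) (use to_iface clauses in simp_all)
qed

lemma destr_tr_closed:
  assumes "destr_tr D tI u E1"
  shows "fv E1 = {} \<and> linear_pats E1"
  using assms
proof (cases rule: destr_trE)
  case (1 Rs cls)
  then show ?thesis
    unfolding 1(3) using assert_match_closed[OF 1(2), of "VAux 1"]
    by (intro closed_lam_case_tup distinct_map_VAux) auto
qed

section \<open>Compatibility lemmas\<close>

lemma erel_struct_lit:
  assumes "TypeStruct s fs \<in> set D" "length es = length fs" "length Es = length fs"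
    "\<forall>i < length fs. erel D \<sigma>m k (snd (fs ! i)) (es ! i) (Es ! i)"
  shows "erel D \<sigma>m k (TS s) (SLit s es) (TApp (TCon (KS s)) (tuple Es))"
proof (rule erel_bind_list[where ts = "map snd fs" and CF = "SLit s"
      and CT = "\<lambda>Es. TApp (TCon (KS s)) (tuple Es)"])
  fix j vs Vs
  assume "length vs = length (map snd fs)" "length Vs = length (map snd fs)"
    "\<forall>i < length (map snd fs). vrel D \<sigma>m j (map snd fs ! i) (vs ! i) (Vs ! i)"
  then show "erel D \<sigma>m j (TS s) (SLit s vs) (TApp (TCon (KS s)) (tuple Vs))"
    by (intro erel_value vrel_TSI[OF assms(1)]) simp_all
qed (use assms eval_ctx_list_SLit eval_ctx_list_TApp_tuple in simp_all)

lemma erel_field: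
  assumes wf: "wf_decls D" and "erel D \<sigma>m k (TS s) e E"
    and fs: "TypeStruct s fs \<in> set D" "i < length fs" "fst (fs ! i) = f"
  shows "erel D \<sigma>m k (snd (fs ! i)) (Field e f)
           (case_tup E (KS s) (map VAux [1..<length fs + 1]) (TVar (VAux (i + 1))))"
proof (rule erel_bind[OF assms(2) eval_ctx_Field eval_ctx_case_tup])
  fix j v V
  assume "vrel D \<sigma>m j (TS s) v V"
  then obtain fs' vs Vs where v: "TypeStruct s fs' \<in> set D" "v = SLit s vs"
    "V = TApp (TCon (KS s)) (tuple Vs)" "length vs = length fs'" "length Vs = length fs'"
    "\<forall>i < length fs'. vrel D \<sigma>m j (snd (fs' ! i)) (vs ! i) (Vs ! i)"
    by (rule vrel_TSE)
  have "fs' = fs"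
    using wf_struct_unique[OF wf v(1) fs(1)] .
  with v have vals: "list_all fval vs" "list_all tval Vs"
    using vrel_values by (auto simp: list_all_length)
  show "erel D \<sigma>m j (snd (fs ! i)) (Field v f)
          (case_tup V (KS s) (map VAux [1..<length fs + 1]) (TVar (VAux (i + 1))))"
    unfolding v(2,3)
  proof (rule erel_fstep_back)
    fix w
    assume "fstep D (Field (SLit s vs) f) w"
    then have w: "w = vs ! i"
      using fstep_Field_SLit[OF wf fs vals(1)] by blast
    have "vrel D \<sigma>m j (snd (fs ! i)) (vs ! i) (Vs ! i)"
      using v(6) \<open>fs' = fs\<close> fs(2) by simp
    then have "erel D \<sigma>m (j - 1 - 2) (snd (fs ! i)) (vs ! i) (Vs ! i)"
      using vrel_mono[of D \<sigma>m j _ _ _ "j - 1 - 2"] by (simp add: erel_value)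
    moreover have "upds TVar (map VAux [1..<1 + length fs]) Vs (VAux (1 + i)) = Vs ! i"
      using upds_VAux_range v(5) \<open>fs' = fs\<close> fs(2) by blast
    ultimately show "erel D \<sigma>m (j - 1) (snd (fs ! i)) w
        (case_tup (TApp (TCon (KS s)) (tuple Vs)) (KS s) (map VAux [1..<length fs + 1])
          (TVar (VAux (i + 1))))"
      unfolding w using vals(2) v(5) \<open>fs' = fs\<close> fs(2)
      by (intro erel_case_tup_back) (simp_all add: distinct_map_VAux)
  qed simp
qed

lemma mrelD:
  assumes "mrel D \<sigma>m j (m, (ps, t)) (Func x s m (ps, t) b) Vm" "i \<le> j"
    "vrel D \<sigma>m i (TS s) v V" "length vs = length ps" "length Vs = length ps"
    "\<forall>l < length ps. vrel D \<sigma>m i (snd (ps ! l)) (vs ! l) (Vs ! l)"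
  shows "erel D \<sigma>m i t (fsubst (upds (Var(x := v)) (map fst ps) vs) b) (TApp (TApp Vm V) (tuple Vs))"
  using assms unfolding mrel_def erel_def by simp

lemma erel_method_call:
  assumes wf: "wf_decls D" and "Func x s m (ps, t) b \<in> set D"
    and "mrel D \<sigma>m j (m, (ps, t)) (Func x s m (ps, t) b) Vm"
    and "vrel D \<sigma>m j (TS s) v V" "length vs = length ps" "length Vs = length ps"
    and "\<forall>i < length ps. vrel D \<sigma>m j (snd (ps ! i)) (vs ! i) (Vs ! i)"
  shows "erel D \<sigma>m j t (Call v m vs) (TApp (TApp Vm V) (tuple Vs))"
proof (rule erel_fstep_back)
  obtain fs vs0 Vs0 where v: "v = SLit s vs0"
    using assms(4) by (rule vrel_TSE)
  have "list_all fval vs0" "list_all fval vs"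
    using vrel_values[OF assms(4)] list_all_fval_args[OF assms(5,7)] by (simp_all add: v)
  fix w
  assume "fstep D (Call v m vs) w"
  then have "w = fsubst (upds (Var(x := v)) (map fst ps) vs) b"
    using fstep_Call_SLit[OF wf assms(2)] \<open>list_all fval vs0\<close> \<open>list_all fval vs\<close> by (simp add: v)
  moreover have "erel D \<sigma>m (j - 1) t (fsubst (upds (Var(x := v)) (map fst ps) vs) b)
      (TApp (TApp Vm V) (tuple Vs))"
    by (rule mrelD[OF assms(3)]) (use assms(4-7) in \<open>auto intro: vrel_mono\<close>)
  ultimately show "erel D \<sigma>m (j - 1) t w (TApp (TApp Vm V) (tuple Vs))"
    by simp
qed simp

lemma erel_call_struct:
  assumes wf: "wf_decls D" and ms: "method_subst \<sigma>m" and dr: "decls_rel D k \<sigma>m"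
    and meth: "(m, (ps, t)) \<in> methods D (TS s)" and recv: "erel D \<sigma>m k (TS s) e E"
    and len: "length es = length ps" "length Es = length ps"
    and args: "\<forall>i < length ps. erel D \<sigma>m k (snd (ps ! i)) (es ! i) (Es ! i)"
  shows "erel D \<sigma>m k t (Call e m es) (TApp (TApp (TMeth m s) E) (tuple Es))"
proof (rule erel_bind[OF recv eval_ctx_Call_recv eval_ctx_method_recv[OF ms]])
  obtain x b where fn: "Func x s m (ps, t) b \<in> set D"
    using meth by auto
  fix j v V
  assume j: "0 < j" "j \<le> k" and v: "vrel D \<sigma>m j (TS s) v V"
  show "erel D \<sigma>m j t (Call v m es) (TApp (TApp (TMeth m s) V) (tuple Es))"
  proof (rule erel_bind_list[where ts = "map snd ps" and CF = "Call v m"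
        and CT = "\<lambda>Es. TApp (TApp (TMeth m s) V) (tuple Es)"])
    fix j' vs Vs
    assume j': "j' \<le> j" and vs: "length vs = length (map snd ps)" "length Vs = length (map snd ps)"
      "\<forall>i < length (map snd ps). vrel D \<sigma>m j' (map snd ps ! i) (vs ! i) (Vs ! i)"
    have "mrel D \<sigma>m k (m, (ps, t)) (Func x s m (ps, t) b) (TMeth m s)"
      using dr fn unfolding decls_rel_def by blast
    then have "mrel D \<sigma>m j' (m, (ps, t)) (Func x s m (ps, t) b) (TMeth m s)"
      by (rule mrel_mono) (use j' j(2) in simp)
    with j' vs show "erel D \<sigma>m j' t (Call v m vs) (TApp (TApp (TMeth m s) V) (tuple Vs))"
      using v by (intro erel_method_call[OF wf fn]) (auto intro: vrel_mono)
  qed (use len args j vrel_values[OF v] in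
        \<open>auto intro: erel_mono eval_ctx_list_Call_args eval_ctx_list_TApp_tuple\<close>)
qed

lemma vrel_upcast_struct:
  assumes dr: "decls_rel D k \<sigma>m" and tI: "TypeIface tI Ss \<in> set D" "set Ss \<subseteq> methods D (TS s)"
    and "j \<le> k" and v: "vrel D \<sigma>m j (TS s) v V"
  shows "vrel D \<sigma>m j (TI tI) v (TApp (TCon (KI tI)) (tuple (V # map (\<lambda>(m, M). TMeth m s) Ss)))"
proof -
  obtain fs vs Vs where "V = TApp (TCon (KS s)) (tuple Vs)"
    using v by (rule vrel_TSE)
  then have V: "V = capp (KS s) [tuple Vs]"
    by (simp add: capp_single)
  show ?thesis
  proof (rule vrel_TII[OF tI(1) _ _ _ _ V])
    show "fval v" "tval V"
      using vrel_values[OF v] by simp_all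
    show "\<forall>i < j. vrel D \<sigma>m i (TS s) v V"
      using vrel_mono[OF v] by simp
    show "\<forall>i < j. \<forall>l < length Ss. \<exists>d. method_lookup D (fst (Ss ! l)) s d \<and>
            mrel D \<sigma>m i (Ss ! l) d (map (\<lambda>(m, M). TMeth m s) Ss ! l)"
    proof (intro allI impI)
      fix i l
      assume "i < j" "l < length Ss"
      obtain m M where SM: "Ss ! l = (m, M)"
        by (metis prod.collapse)
      have "(m, M) \<in> methods D (TS s)"
        using tI(2) nth_mem[OF \<open>l < length Ss\<close>] unfolding SM by blast
      then obtain x e where fn: "Func x s m M e \<in> set D"
        by auto
      then have "mrel D \<sigma>m k (m, M) (Func x s m M e) (TMeth m s)"
        using dr unfolding decls_rel_def by blast
      then have "mrel D \<sigma>m i (m, M) (Func x s m M e) (TMeth m s)"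
        by (rule mrel_mono) (use \<open>i < j\<close> \<open>j \<le> k\<close> in simp)
      moreover have "method_lookup D m s (Func x s m M e)"
        using fn unfolding method_lookup_def by blast
      ultimately show "\<exists>d. method_lookup D (fst (Ss ! l)) s d \<and>
          mrel D \<sigma>m i (Ss ! l) d (map (\<lambda>(m, M). TMeth m s) Ss ! l)"
        using SM \<open>l < length Ss\<close> by auto
    qed
  qed (simp_all add: list_all_iff tval_def split_def)
qed

lemma erel_upcast_struct_value:
  assumes dr: "decls_rel D k \<sigma>m" and "subty_tr D (TS s) (TI tI) E1" "j \<le> k" "vrel D \<sigma>m j (TS s) v V"
  shows "erel D \<sigma>m j (TI tI) v (TApp E1 V)"
  using assms(2)
proof (cases rule: subty_trE)
  case (struct_iface s' tI' Ss)
  let ?meths = "map (\<lambda>(m, M). TMeth m s) Ss"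
  have E1: "E1 = TLam (VAux 0) (TApp (TCon (KI tI)) (tuple (TVar (VAux 0) # ?meths)))"
    and tI: "TypeIface tI Ss \<in> set D" "set Ss \<subseteq> methods D (TS s)"
    using struct_iface by simp_all
  have "vrel D \<sigma>m (j - 1) (TI tI) v (TApp (TCon (KI tI)) (tuple (V # ?meths)))"
    by (rule vrel_upcast_struct[OF dr tI _ vrel_mono[OF assms(4)]]) (use assms(3) in simp_all)
  show ?thesis
  proof (rule erel_tstep_back)
    fix W
    assume "tstep \<sigma>m (TApp E1 V) W"
    then have "W = tsubst (TVar(VAux 0 := V)) (TApp (TCon (KI tI)) (tuple (TVar (VAux 0) # ?meths)))"
      unfolding E1 using tstep_beta_inv by blast
    also have "\<dots> = TApp (TCon (KI tI)) (tuple (V # ?meths))"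
      by (simp add: tsubst_tuple split_def comp_def)
    finally show "erel D \<sigma>m (j - 1) (TI tI) v W"
      using \<open>vrel D \<sigma>m (j - 1) (TI tI) v _\<close> by (simp add: erel_value)
  qed (simp add: E1 tval_def)
qed simp

lemma erel_upcast_iface_value:
  assumes wf: "wf_decls D" and "subty_tr D (TI tI) (TI uI) E1" and v: "vrel D \<sigma>m j (TI tI) v V"
  shows "erel D \<sigma>m j (TI uI) v (TApp E1 V)"
  using assms(2)
proof (cases rule: subty_trE)
  case (iface_iface tI' uI' Rs Ss \<pi>)
  let ?xs = "map VAux [1..<length Rs + 2]" and ?b = "iface_coercion_body uI \<pi> (length Ss)"
  have E1: "E1 = TLam (VAux 0) (case_tup (TVar (VAux 0)) (KI tI) ?xs ?b)"
    and Rs: "TypeIface tI Rs \<in> set D" and Ss: "TypeIface uI Ss \<in> set D"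
    and \<pi>Ss: "\<forall>i < length Ss. \<pi> i < length Rs \<and> Ss ! i = Rs ! \<pi> i"
    using iface_iface by simp_all
  obtain Rs' W Vms u Vs' where I: "TypeIface tI Rs' \<in> set D" "V = TApp (TCon (KI tI)) (tuple (W # Vms))"
    "length Vms = length Rs'" "list_all tval Vms" "fval v" "tval W" "W = capp (KS u) Vs'"
    "\<forall>i < j. vrel D \<sigma>m i (TS u) v W"
    "\<forall>i < j. \<forall>l < length Rs'. \<exists>d. method_lookup D (fst (Rs' ! l)) u d \<and> mrel D \<sigma>m i (Rs' ! l) d (Vms ! l)"
    using v by (rule vrel_TIE)
  have "Rs' = Rs"
    using wf_iface_unique[OF wf I(1) Rs] .
  have \<pi>: "\<forall>i < length Ss. \<pi> i < length Rs"
    using \<pi>Ss by simp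
  let ?Vms' = "map (\<lambda>i. Vms ! \<pi> i) [0..<length Ss]"
  have "vrel D \<sigma>m (j - 3) (TI uI) v (TApp (TCon (KI uI)) (tuple (W # ?Vms')))"
  proof (rule vrel_TII[OF Ss _ _ I(5,6,7)])
    show "list_all tval ?Vms'"
      using I(3,4) \<pi> \<open>Rs' = Rs\<close> by (auto simp: list_all_length)
    show "\<forall>i < j - 3. vrel D \<sigma>m i (TS u) v W"
      using I(8) by simp
    show "\<forall>i < j - 3. \<forall>l < length Ss. \<exists>d. method_lookup D (fst (Ss ! l)) u d \<and>
        mrel D \<sigma>m i (Ss ! l) d (?Vms' ! l)"
      using I(9) \<pi>Ss \<open>Rs' = Rs\<close> by simp
  qed simp
  moreover have "tsubst (upds TVar ?xs (W # Vms)) ?b = TApp (TCon (KI uI)) (tuple (W # ?Vms'))"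
    using tsubst_iface_coercion_body[of "length Ss" \<pi> Vms W uI] \<pi> I(3) \<open>Rs' = Rs\<close> by simp
  ultimately have "erel D \<sigma>m (j - 3) (TI uI) v (tsubst (upds TVar ?xs (W # Vms)) ?b)"
    by (simp add: erel_value)
  then show ?thesis
    unfolding E1 I(2) using I(3,4,6) \<open>Rs' = Rs\<close> iface_coercion_body_closed[OF \<pi>]
    by (intro erel_lam_case_tup_back) (simp_all add: distinct_map_VAux)
qed simp

lemma erel_subtype:
  assumes wf: "wf_decls D" and dr: "decls_rel D k \<sigma>m"
    and sub: "subty_tr D t u E1" and IH: "erel D \<sigma>m k t e E"
  shows "erel D \<sigma>m k u e (TApp E1 E)"
proof (rule erel_bind[OF IH eval_ctx_id eval_ctx_TApp_arg])
  fix j v V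
  assume "j \<le> k" "vrel D \<sigma>m j t v V"
  from sub show "erel D \<sigma>m j u v (TApp E1 V)"
  proof (cases rule: subty_trE)
    case (struct_iface s tI Ss)
    then show ?thesis
      using erel_upcast_struct_value[OF dr, of s tI E1 j v V] sub \<open>j \<le> k\<close> \<open>vrel D \<sigma>m j t v V\<close> by simp
  next
    case (iface_iface tI uI Rs Ss \<pi>)
    then show ?thesis
      using erel_upcast_iface_value[OF wf, of tI uI E1 \<sigma>m j v V] sub \<open>vrel D \<sigma>m j t v V\<close> by simp
  qed
qed

lemma erel_assert_match:
  assumes dr: "decls_rel D k \<sigma>m" and cls: "\<forall>c \<in> set cls. assert_clause D u n c" and "j \<le> k"
    and W: "W = TApp (TCon (KS s)) (tuple Vs)" "\<forall>i < j. vrel D \<sigma>m i (TS s) v W"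
  shows "erel D \<sigma>m j u v (TCase W cls)"
proof (cases "j = 0")
  case False
  then have v: "vrel D \<sigma>m (j - 1) (TS s) v W"
    using W(2) by simp
  then have "list_all tval [tuple Vs]"
    using vrel_values[OF v] W(1) by (simp add: tval_TApp_TCon)
  show ?thesis
  proof (rule erel_tstep_back)
    fix W'
    assume "tstep \<sigma>m (TCase W cls) W'"
    then have "tstep \<sigma>m (TCase (capp (KS s) [tuple Vs]) cls) W'"
      by (simp add: W(1) capp_single)
    then obtain xs B where c: "((KS s, xs), B) \<in> set cls" "W' = tsubst (upds TVar xs [tuple Vs]) B"
      using \<open>list_all tval [tuple Vs]\<close> by (rule tstep_case_value)
    from cls c(1) have "assert_clause D u n ((KS s, xs), B)"
      by blast
    then have xs: "xs = [VAux n]" and B: "u = TS s \<and> B = TApp (TCon (KS s)) (TVar (VAux n)) \<or>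
        (\<exists>uI Ej. u = TI uI \<and> subty_tr D (TS s) (TI uI) Ej \<and>
           B = TApp Ej (TApp (TCon (KS s)) (TVar (VAux n))))"
      unfolding assert_clause_def by auto
    have \<sigma>: "upds TVar xs [tuple Vs] = TVar(VAux n := tuple Vs)"
      by (simp add: xs upds_def)
    from B show "erel D \<sigma>m (j - 1) u v W'"
    proof (elim disjE exE conjE)
      assume "u = TS s" "B = TApp (TCon (KS s)) (TVar (VAux n))"
      with c(2) \<sigma> W(1) v show ?thesis
        by (simp add: erel_value)
    next
      fix uI Ej
      assume u: "u = TI uI" "subty_tr D (TS s) (TI uI) Ej"
        "B = TApp Ej (TApp (TCon (KS s)) (TVar (VAux n)))"
      then have "W' = TApp Ej W"
        using c(2) \<sigma> W(1) subty_tr_closed[OF u(2)] by (simp add: tsubst_closed)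
      then show ?thesis
        using erel_upcast_struct_value[OF dr u(2) _ v] \<open>j \<le> k\<close> u(1) by simp
    qed
  qed (simp add: tval_def)
qed (simp add: erel_zero)

lemma erel_assert_value:
  assumes wf: "wf_decls D" and dr: "decls_rel D k \<sigma>m" and "0 < j" "j \<le> k"
    and Rs: "TypeIface tI Rs \<in> set D" and cls: "\<forall>c \<in> set cls. assert_clause D u (length Rs + 2) c"
    and v: "vrel D \<sigma>m j (TI tI) v V"
  shows "erel D \<sigma>m j u (Assert v u)
    (TApp (TLam (VAux 0) (case_tup (TVar (VAux 0)) (KI tI) (map VAux [1..<length Rs + 2])
      (TCase (TVar (VAux 1)) cls))) V)"
proof -
  let ?xs = "map VAux [1..<length Rs + 2]" and ?b = "TCase (TVar (VAux 1)) cls"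
  obtain Rs' W Vms s Vs' where I: "TypeIface tI Rs' \<in> set D" "V = TApp (TCon (KI tI)) (tuple (W # Vms))"
    "length Vms = length Rs'" "list_all tval Vms" "fval v" "tval W" "W = capp (KS s) Vs'"
    "\<forall>i < j. vrel D \<sigma>m i (TS s) v W"
    using v by (rule vrel_TIE)
  have "Rs' = Rs"
    using wf_iface_unique[OF wf I(1) Rs] .
  have b: "fv ?b \<subseteq> set ?xs" "linear_pats ?b"
    using assert_match_closed[OF cls, of "VAux 1"] by auto
  have "vrel D \<sigma>m 0 (TS s) v W"
    using I(8) \<open>0 < j\<close> by simp
  then obtain fs vs Vs where W: "W = TApp (TCon (KS s)) (tuple Vs)"
    by (rule vrel_TSE)
  have "upds TVar ?xs (W # Vms) (VAux (1 + 0)) = W"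
    using upds_VAux_range[of "W # Vms" "length Rs + 1" 0 TVar 1] I(3) \<open>Rs' = Rs\<close> by simp
  moreover have "tsubst \<sigma> ?b = TCase (\<sigma> (VAux 1)) cls" for \<sigma>
  proof (rule trans[OF tsubst_TCase_fixed_clauses])
    fix K xs B
    assume "((K, xs), B) \<in> set cls"
    then show "distinct xs \<and> linear_pats B \<and> (\<forall>y \<in> fv B - set xs. \<sigma> y = TVar y)"
      using assert_clause_closed cls by fastforce
  qed simp
  ultimately have "tsubst (upds TVar ?xs (W # Vms)) ?b = TCase W cls"
    by simp
  moreover have "erel D \<sigma>m (j - 1 - 3) u v (TCase W cls)"
    by (rule erel_assert_match[OF dr cls _ W]) (use \<open>j \<le> k\<close> I(8) in simp_all)
  ultimately have lam_rel:
    "erel D \<sigma>m (j - 1) u v (TApp (TLam (VAux 0) (case_tup (TVar (VAux 0)) (KI tI) ?xs ?b)) V)"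
    unfolding I(2) using I(3,4,6) \<open>Rs' = Rs\<close> b
    by (intro erel_lam_case_tup_back) (simp_all add: distinct_map_VAux)
  show ?thesis
  proof (rule erel_fstep_back)
    fix w
    assume "fstep D (Assert v u) w"
    then have "w = v"
      using fstep_Assert_value I(5) by blast
    with lam_rel
    show "erel D \<sigma>m (j - 1) u w (TApp (TLam (VAux 0) (case_tup (TVar (VAux 0)) (KI tI) ?xs ?b)) V)"
      by simp
  qed simp
qed

lemma erel_assert:
  assumes wf: "wf_decls D" and dr: "decls_rel D k \<sigma>m"
    and de: "destr_tr D tI u E1" and IH: "erel D \<sigma>m k (TI tI) e E"
  shows "erel D \<sigma>m k u (Assert e u) (TApp E1 E)"
  using de
proof (cases rule: destr_trE)
  case (1 Rs cls)
  show ?thesis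
    unfolding 1(3)
    by (rule erel_bind[OF IH eval_ctx_Assert eval_ctx_TApp_arg])
      (rule erel_assert_value[OF wf dr _ _ 1(1,2)])
qed

lemma tsubst_case_tup_renamed:
  obtains z xs' where
    "tsubst \<sigma> (case_tup E K xs b) =
       TCase (tsubst \<sigma> E) [((K, [z]), TCase (TVar z) [((KTup (length xs), xs'),
         tsubst (upds (\<sigma>(VAux 0 := TVar z)) xs (map TVar xs')) b)])]"
    "z \<notin> \<Union> (fv ` \<sigma> ` (fv b - set xs - {VAux 0}))"
    "length xs' = length xs" "distinct xs'"
    "set xs' \<inter> \<Union> (fv ` (\<sigma>(VAux 0 := TVar z)) ` (fv b - set xs)) = {}"
proof -
  let ?inner = "TCase (TVar (VAux 0)) [((KTup (length xs), xs), b)]"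
  define A0 where "A0 = \<Union> (fv ` \<sigma> ` (fv ?inner - set [VAux 0]))"
  have A0: "A0 = \<Union> (fv ` \<sigma> ` (fv b - set xs - {VAux 0}))"
    unfolding A0_def by (rule arg_cong[where f = "\<lambda>X. \<Union> (fv ` \<sigma> ` X)"]) auto
  have "finite A0"
    unfolding A0_def by (simp add: finite_fv)
  then obtain z where z: "ren A0 [VAux 0] = [z]" "z \<notin> A0"
    using ren_distinct_fresh[of A0 "[VAux 0]"] length_ren[of A0 "[VAux 0]"]
    by (cases "ren A0 [VAux 0]") auto
  define \<sigma>1 where "\<sigma>1 = \<sigma>(VAux 0 := TVar z)"
  define A1 where "A1 = \<Union> (fv ` \<sigma>1 ` (fv b - set xs))"
  define xs' where "xs' = ren A1 xs"
  have "finite A1"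
    unfolding A1_def by (simp add: finite_fv)
  then have xs': "length xs' = length xs" "distinct xs'" "set xs' \<inter> A1 = {}"
    using ren_distinct_fresh unfolding xs'_def by simp_all
  have "tsubst \<sigma>1 ?inner =
      TCase (TVar z) [((KTup (length xs), xs'), tsubst (upds \<sigma>1 xs (map TVar xs')) b)]"
    unfolding tsubst_TCase list.map subst_clause_eq Let_def A1_def[symmetric] xs'_def[symmetric]
    by (simp add: \<sigma>1_def)
  moreover have "upds \<sigma> [VAux 0] (map TVar [z]) = \<sigma>1"
    by (simp add: upds_def \<sigma>1_def)
  ultimately have "tsubst \<sigma> (case_tup E K xs b) =
      TCase (tsubst \<sigma> E) [((K, [z]), TCase (TVar z)
        [((KTup (length xs), xs'), tsubst (upds \<sigma>1 xs (map TVar xs')) b)])]"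
    unfolding case_tup_def tsubst_TCase list.map subst_clause_eq A0_def[symmetric] z(1) Let_def
    by simp
  then show ?thesis
    using z(2) xs' unfolding A0 A1_def \<sigma>1_def by (rule that)
qed

lemma tsubst_list_fv_linear_pats:
  assumes "\<forall>Ei \<in> set Es. \<forall>y \<in> fv Ei. linear_pats (\<sigma> y)"
  shows "\<forall>S \<in> set (map (tsubst \<sigma>) Es). fv S \<subseteq> \<Union> (fv ` \<sigma> ` \<Union> (fv ` set Es)) \<and> linear_pats S"
proof
  fix S
  assume "S \<in> set (map (tsubst \<sigma>) Es)"
  then obtain Ei where Ei: "Ei \<in> set Es" "S = tsubst \<sigma> Ei"
    by auto
  have "fv Ei \<subseteq> \<Union> (fv ` set Es)"
    using Ei(1) by blast
  then have "\<Union> (fv ` \<sigma> ` fv Ei) \<subseteq> \<Union> (fv ` \<sigma> ` \<Union> (fv ` set Es))"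
    by (intro Union_mono image_mono)
  then have "fv S \<subseteq> \<Union> (fv ` \<sigma> ` \<Union> (fv ` set Es))"
    unfolding Ei(2) by (rule order_trans[OF fv_tsubst])
  moreover have "linear_pats S"
    unfolding Ei(2) by (rule linear_pats_tsubst) (use Ei(1) assms in blast)
  ultimately show "fv S \<subseteq> \<Union> (fv ` \<sigma> ` \<Union> (fv ` set Es)) \<and> linear_pats S" ..
qed

text \<open>Related TL values may contain free variables (the relation on methods holds vacuously for a
  variable in a method slot), so substituting them into a translation can rename its binders.\<close>

lemma tsubst_call_iface:
  assumes VX: "\<forall>Ei \<in> set Es. fv Ei \<subseteq> range VX"
    and lin: "\<forall>Ei \<in> set Es. \<forall>y \<in> fv Ei. linear_pats (\<sigma> y)" and "q < n"
  obtains z xs' A where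
    "tsubst \<sigma> (case_tup E K (map VAux [1..<n + 2])
        (TApp (TApp (TVar (VAux (q + 2))) (TVar (VAux 1))) (tuple Es)))
       = TCase (tsubst \<sigma> E) [((K, [z]), TCase (TVar z) [((KTup (n + 1), xs'),
           TApp (TApp (TVar (xs' ! (q + 1))) (TVar (xs' ! 0))) (tuple (map (tsubst \<sigma>) Es)))])]"
    "length xs' = n + 1" "distinct xs'" "z \<notin> A" "set xs' \<inter> A = {}"
    "\<forall>S \<in> set (map (tsubst \<sigma>) Es). fv S \<subseteq> A \<and> linear_pats S"
proof -
  let ?xs = "map VAux [1..<n + 2]"
  let ?b = "TApp (TApp (TVar (VAux (q + 2))) (TVar (VAux 1))) (tuple Es)"
  define F where "F = \<Union> (fv ` set Es)"
  define A where "A = \<Union> (fv ` \<sigma> ` F)"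
  have F: "F \<inter> set ?xs = {}" "VAux 0 \<notin> F"
    using VX unfolding F_def by auto
  moreover have "VAux (q + 2) \<in> set ?xs" "VAux 1 \<in> set ?xs"
    using \<open>q < n\<close> by simp_all
  ultimately have fv_b: "fv ?b - set ?xs = F"
    unfolding F_def by (auto simp: fv_tuple)
  obtain z xs' where z: "tsubst \<sigma> (case_tup E K ?xs ?b) =
       TCase (tsubst \<sigma> E) [((K, [z]), TCase (TVar z) [((KTup (length ?xs), xs'),
         tsubst (upds (\<sigma>(VAux 0 := TVar z)) ?xs (map TVar xs')) ?b)])]"
    "z \<notin> \<Union> (fv ` \<sigma> ` (fv ?b - set ?xs - {VAux 0}))" "length xs' = length ?xs" "distinct xs'"
    "set xs' \<inter> \<Union> (fv ` (\<sigma>(VAux 0 := TVar z)) ` (fv ?b - set ?xs)) = {}"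
    by (rule tsubst_case_tup_renamed)
  let ?\<sigma>' = "upds (\<sigma>(VAux 0 := TVar z)) ?xs (map TVar xs')"
  have \<sigma>'_F: "?\<sigma>' y = \<sigma> y" if "y \<in> F" for y
  proof -
    have "y \<notin> set ?xs" "y \<noteq> VAux 0"
      using F that by blast+
    then show ?thesis
      by (simp add: upds_notin)
  qed
  have "?\<sigma>' (VAux (1 + i)) = TVar (xs' ! i)" if "i < n + 1" for i
    using upds_VAux_range[of "map TVar xs'" "n + 1" i _ 1] z(3) that by simp
  from this[of 0] this[of "q + 1"] \<open>q < n\<close>
  have vars: "?\<sigma>' (VAux 1) = TVar (xs' ! 0)" "?\<sigma>' (VAux (q + 2)) = TVar (xs' ! (q + 1))"
    by simp_all
  have args: "map (tsubst ?\<sigma>') Es = map (tsubst \<sigma>) Es"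
    by (rule map_cong[OF refl], rule tsubst_cong) (use \<sigma>'_F in \<open>auto simp: F_def\<close>)
  have body: "tsubst ?\<sigma>' ?b =
      TApp (TApp (TVar (xs' ! (q + 1))) (TVar (xs' ! 0))) (tuple (map (tsubst \<sigma>) Es))"
    by (simp only: tsubst.simps tsubst_tuple vars args)
  have img: "(\<sigma>(VAux 0 := TVar z)) ` F = \<sigma> ` F" and F0: "F - {VAux 0} = F"
    using F(2) by auto
  have "z \<notin> A"
    using z(2) unfolding fv_b F0 A_def .
  have "set xs' \<inter> A = {}"
    using z(5) unfolding fv_b img A_def .
  have SE: "\<forall>S \<in> set (map (tsubst \<sigma>) Es). fv S \<subseteq> A \<and> linear_pats S"
    using tsubst_list_fv_linear_pats[OF lin] unfolding A_def F_def .
  show ?thesis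
    by (rule that[OF _ _ z(4) \<open>z \<notin> A\<close> \<open>set xs' \<inter> A = {}\<close> SE]) (use z(1,3) body in simp_all)
qed

lemma fg_trans_fv: "fg_trans D \<Delta> e t E \<Longrightarrow> fv E \<subseteq> VX ` dom \<Delta>"
proof (induction rule: fg_trans.induct)
  case (tr_struct s fs es Es)
  then show ?case
    by (fastforce simp: fv_tuple in_set_conv_nth)
next
  case (tr_access e s E fs i f)
  then show ?case
    by (auto simp: fv_case_tup)
next
  case (tr_call_struct m ps t s e E es Es)
  then show ?case
    by (fastforce simp: fv_tuple in_set_conv_nth)
next
  case (tr_call_iface e tI E Ss j m ps t es Es)
  then show ?case
    by (fastforce simp: fv_case_tup fv_tuple in_set_conv_nth)
next
  case (tr_sub e t E2 u E1)
  then show ?case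
    using subty_tr_closed by simp
next
  case (tr_assert e tI E2 u E1)
  then show ?case
    using destr_tr_closed by simp
qed auto

lemma tsubst_method_dispatch:
  assumes "length xs = length (W # Vms)" "distinct xs" "q < length Vms"
    and "set xs \<inter> A = {}" "\<forall>S \<in> set Es. fv S \<subseteq> A \<and> linear_pats S"
  shows "tsubst (upds TVar xs (W # Vms)) (TApp (TApp (TVar (xs ! (q + 1))) (TVar (xs ! 0))) (tuple Es))
    = TApp (TApp (Vms ! q) W) (tuple Es)"
proof -
  have "upds TVar xs (W # Vms) (xs ! (q + 1)) = Vms ! q" "upds TVar xs (W # Vms) (xs ! 0) = W"
    using upds_nth[OF assms(2,1)] assms(1,3) by fastforce+
  moreover have "map (tsubst (upds TVar xs (W # Vms))) Es = Es"
    using assms(4,5) by (auto intro!: map_idI tsubst_id upds_notin)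
  ultimately show ?thesis
    by (simp add: tsubst_tuple)
qed

lemma bindings_rel_linear_pats:
  "bindings_rel D \<sigma>m \<Delta> k \<sigma>F \<sigma>V \<Longrightarrow> y \<in> VX ` dom \<Delta> \<Longrightarrow> linear_pats (\<sigma>V y)"
  unfolding bindings_rel_def using vrel_values linear_pats_tval by blast

lemma erel_call_iface:
  assumes wf: "wf_decls D" and recv: "erel D \<sigma>m k (TI tI) e E"
    and tI: "TypeIface tI Ss \<in> set D" "q < length Ss" "Ss ! q = (m, (ps, t))"
    and len: "length es = length ps" "length Es = length ps"
    and args: "\<forall>i < length ps. erel D \<sigma>m k (snd (ps ! i)) (es ! i) (Es ! i)"
    and xs: "length xs = length Ss + 1" "distinct xs" "z \<notin> A" "set xs \<inter> A = {}"
    and Es: "\<forall>S \<in> set Es. fv S \<subseteq> A \<and> linear_pats S"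
  shows "erel D \<sigma>m k t (Call e m es) (TCase E [((KI tI, [z]), TCase (TVar z)
           [((KTup (length Ss + 1), xs), TApp (TApp (TVar (xs ! (q + 1))) (TVar (xs ! 0))) (tuple Es))])])"
proof (rule erel_bind[OF recv eval_ctx_Call_recv eval_ctx_TCase])
  let ?body = "TApp (TApp (TVar (xs ! (q + 1))) (TVar (xs ! 0))) (tuple Es)"
  fix j v V
  assume j: "0 < j" "j \<le> k" and v: "vrel D \<sigma>m j (TI tI) v V"
  obtain Ss' W Vms u Vs' where I: "TypeIface tI Ss' \<in> set D" "V = TApp (TCon (KI tI)) (tuple (W # Vms))"
    "length Vms = length Ss'" "list_all tval Vms" "fval v" "tval W" "W = capp (KS u) Vs'"
    "\<forall>i < j. vrel D \<sigma>m i (TS u) v W"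
    "\<forall>i < j. \<forall>l < length Ss'. \<exists>d. method_lookup D (fst (Ss' ! l)) u d \<and> mrel D \<sigma>m i (Ss' ! l) d (Vms ! l)"
    using v by (rule vrel_TIE)
  have "Ss' = Ss"
    using wf_iface_unique[OF wf I(1) tI(1)] .
  have "erel D \<sigma>m (j - 2) t (Call v m es) (TApp (TApp (Vms ! q) W) (tuple Es))"
  proof (rule erel_bind_list[where ts = "map snd ps" and CF = "Call v m"
        and CT = "\<lambda>Es. TApp (TApp (Vms ! q) W) (tuple Es)"])
    fix j' vs Vs
    assume j': "0 < j'" "j' \<le> j - 2" and vs: "length vs = length (map snd ps)"
      "length Vs = length (map snd ps)"
      "\<forall>i < length (map snd ps). vrel D \<sigma>m j' (map snd ps ! i) (vs ! i) (Vs ! i)"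
    have "j' < j"
      using j' by simp
    with I(9) tI(2) \<open>Ss' = Ss\<close> obtain d
      where "method_lookup D (fst (Ss ! q)) u d" "mrel D \<sigma>m j' (Ss ! q) d (Vms ! q)"
      by blast
    then have "method_lookup D m u d" "mrel D \<sigma>m j' (m, (ps, t)) d (Vms ! q)"
      using tI(3) by simp_all
    then obtain x b where "Func x u m (ps, t) b \<in> set D"
      "mrel D \<sigma>m j' (m, (ps, t)) (Func x u m (ps, t) b) (Vms ! q)"
      unfolding method_lookup_def mrel_def by (auto elim: mrelP.elims)
    then show "erel D \<sigma>m j' t (Call v m vs) (TApp (TApp (Vms ! q) W) (tuple Vs))"
      using I(8) j' vs by (intro erel_method_call[OF wf]) auto
  qed (use len args I(5) j in \<open>auto intro: erel_mono eval_ctx_list_Call_args eval_ctx_list_TApp_tuple\<close>)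
  moreover have "tsubst (upds TVar xs (W # Vms)) ?body = TApp (TApp (Vms ! q) W) (tuple Es)"
    by (rule tsubst_method_dispatch[where A = A]) (use I(3) \<open>Ss' = Ss\<close> tI(2) xs(1,2,4) Es in auto)
  ultimately have "erel D \<sigma>m (j - 2) t (Call v m es) (tsubst (upds TVar xs (W # Vms)) ?body)"
    by simp
  then show "erel D \<sigma>m j t (Call v m es)
      (TCase V [((KI tI, [z]), TCase (TVar z) [((KTup (length Ss + 1), xs), ?body)])])"
    unfolding I(2) xs(1)[symmetric]
    by (rule erel_nested_case_back)
      (use I(3,4,6) \<open>Ss' = Ss\<close> tI(2) xs Es in \<open>auto simp: fv_tuple linear_pats_tuple list_all_iff\<close>)
qed

lemma erel_call_iface_tsubst:
  assumes wf: "wf_decls D" and br: "bindings_rel D \<sigma>m \<Delta> k \<sigma>F \<sigma>V"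
    and recv: "erel D \<sigma>m k (TI tI) (fsubst \<sigma>F e) (tsubst \<sigma>V E)"
    and tI: "TypeIface tI Ss \<in> set D" "q < length Ss" "Ss ! q = (m, (ps, t))"
    and len: "length es = length ps" "length Es = length ps"
    and args: "\<forall>i < length ps. fg_trans D \<Delta> (es ! i) (snd (ps ! i)) (Es ! i) \<and>
      erel D \<sigma>m k (snd (ps ! i)) (fsubst \<sigma>F (es ! i)) (tsubst \<sigma>V (Es ! i))"
  shows "erel D \<sigma>m k t (fsubst \<sigma>F (Call e m es)) (tsubst \<sigma>V (case_tup E (KI tI)
    (map VAux [1..<length Ss + 2]) (TApp (TApp (TVar (VAux (q + 2))) (TVar (VAux 1))) (tuple Es))))"
proof -
  have "fv Ei \<subseteq> VX ` dom \<Delta>" if Ei: "Ei \<in> set Es" for Ei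
  proof -
    obtain i where "i < length ps" "Ei = Es ! i"
      using Ei len(2) by (auto simp: in_set_conv_nth)
    with args show ?thesis
      using fg_trans_fv by blast
  qed
  then have "\<forall>Ei \<in> set Es. fv Ei \<subseteq> range VX" "\<forall>Ei \<in> set Es. \<forall>y \<in> fv Ei. linear_pats (\<sigma>V y)"
    using bindings_rel_linear_pats[OF br] by blast+
  then obtain z xs A where eq:
    "tsubst \<sigma>V (case_tup E (KI tI) (map VAux [1..<length Ss + 2])
       (TApp (TApp (TVar (VAux (q + 2))) (TVar (VAux 1))) (tuple Es))) =
     TCase (tsubst \<sigma>V E) [((KI tI, [z]), TCase (TVar z) [((KTup (length Ss + 1), xs),
       TApp (TApp (TVar (xs ! (q + 1))) (TVar (xs ! 0))) (tuple (map (tsubst \<sigma>V) Es)))])]"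
    and xs: "length xs = length Ss + 1" "distinct xs" "z \<notin> A" "set xs \<inter> A = {}"
    and SE: "\<forall>S \<in> set (map (tsubst \<sigma>V) Es). fv S \<subseteq> A \<and> linear_pats S"
    using tI(2) by (rule tsubst_call_iface)
  show ?thesis
    unfolding fsubst.simps eq
    by (rule erel_call_iface[OF wf recv tI _ _ _ xs SE]) (use len args in auto)
qed

theorem lemma4:
  fixes D :: decls and \<Delta> :: "vname \<rightharpoonup> ty" and e :: fexp and t :: ty and E :: texp
    and \<sigma>F :: "vname \<Rightarrow> fexp" and \<sigma>V :: "tlvar \<Rightarrow> texp" and \<sigma>m :: msub and k :: nat
  assumes "wf_decls D"
    and "method_subst \<sigma>m"
    and "fg_trans D \<Delta> e t E"
    and "bindings_rel D \<sigma>m \<Delta> k \<sigma>F \<sigma>V"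
    and "decls_rel D k \<sigma>m"
  shows "erel D \<sigma>m k t (fsubst \<sigma>F e) (tsubst \<sigma>V E)"
  using assms(3)
proof (induction rule: fg_trans.induct)
  case (tr_var x t)
  with assms(4) show ?case
    unfolding bindings_rel_def by (simp add: erel_value)
next
  case (tr_struct s fs es Es)
  then show ?case
    using erel_struct_lit[OF tr_struct(1), of "map (fsubst \<sigma>F) es" "map (tsubst \<sigma>V) Es"]
    by (simp add: tsubst_tuple)
next
  case (tr_access e s E fs i f)
  then show ?case
    using erel_field[OF assms(1) tr_access.IH tr_access(2-4)]
    by (simp add: tsubst_case_tup distinct_map_VAux)
next
  case (tr_call_struct m ps t s e E es Es)
  then show ?case
    using erel_call_struct[OF assms(1,2,5) tr_call_struct(1) tr_call_struct.IH(1),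
        of "map (fsubst \<sigma>F) es" "map (tsubst \<sigma>V) Es"]
    by (simp add: tsubst_tuple)
next
  case (tr_call_iface e tI E Ss q m ps t es Es)
  then show ?case
    by (intro erel_call_iface_tsubst[OF assms(1,4)]) simp_all
next
  case (tr_sub e t E2 u E1)
  then show ?case
    using subty_tr_closed erel_subtype[OF assms(1,5)] by (simp add: tsubst_closed)
next
  case (tr_assert e tI E2 u E1)
  then show ?case
    using destr_tr_closed erel_assert[OF assms(1,5)] by (simp add: tsubst_closed)
qed

end
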